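(* Let $0<\epsilon<1$ and assume $E\setminus T\neq\emptyset$. Run the SimpleSolver process for $K=\left\lceil \tau \ln\!\big(\mathrm{st}(T)\,\tau/\epsilon\big)\right\rceil$ cycle updates, obtaining $f_K$ and its tree induced voltages $v_K$. Then \[ \mathbb{E}\big[\xi_r(f_K)\big]\le (1+\epsilon)\,\xi_r(f^* )\qquad\text{and}\qquad \mathbb{E}\,\big\|v_K-L^\dagger\chi\big\|_L\le \sqrt{\epsilon}\,\big\|L^\dagger\chi\big\|_L . \]
   Context: Let $G=(V,E,w)$ be a connected undirected graph with $n=|V|$, $m=|E|$, edge weights $w_e>0$ and resistances $r_e=1/w_e$. Each edge has a fixed orientation $(a,b)$; for $f\in\mathbb{R}^E$ write $f(b,a):=-f(a,b)$. The incidence matrix $B\in\mathbb{R}^{E\times V}$ has $B_{(a,b),c}=1$ if $c=a$, $-1$ if $c=b$, $0$ otherwise; $R=\mathrm{diag}(r_e)_{e\in E}$; the Laplacian is $L=B^TR^{-1}B$ and $L^\dagger$ is its Moore–Penrose pseudoinverse; $\|x\|_M=\sqrt{x^TMx}$. The energy of $f\in\mathbb{R}^E$ is $\xi_r(f)=f^TRf$. Fix $\chi\in\mathbb{R}^V$ with $\sum_a\chi(a)=0$; $f$ is feasible if $B^Tf=\chi$; $f^*$ is the unique feasible $f$ minimizing $\xi_r(f)$. Let $T\subseteq E$ be a spanning tree. For vertices $a,b$, $\pi_{(a,b)}\in\mathbb{R}^E$ is the unit flow from $a$ to $b$ along the unique $a$–$b$ path in $T$, and $P_{(a,b)}$ is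 the set of edges of that path. For $e=(a,b)\in E\setminus T$, the tree cycle vector is $c_e=\mathbf{1}_e-\pi_{(a,b)}$, $R_e=c_e^TRc_e$, and $\Delta_e(f)=f^TRc_e$. The tree condition number is $\tau=\sum_{e\in E\setminus T}R_e/r_e$. The stretch of $e=(a,b)\in E$ is $\mathrm{st}(e)=\frac{1}{r_e}\sum_{e'\in P_{(a,b)}}r_{e'}$ and $\mathrm{st}(T)=\sum_{e\in E}\mathrm{st}(e)$. Fix a root $s\in V$; the tree induced voltages of $f$ are $v(a)=\sum r_{e'}f(e')$, summing over the edges $e'$ of the tree path from $a$ to $s$, each traversed in the direction of the path (with the antisymmetry convention). Let $p$ be the probability distribution on $E\setminus T$ with $p_e=\frac{R_e}{r_e\tau}$. The SimpleSolver process: $f_0$ is the unique feasible flow supported on $T$; for $i\ge1$, $e_i$ is drawn from $p$ independently of everything else and $f_i=f_{i-1}-\frac{\Delta_{e_i}(f_{i-1})}{R_{e_i}}c_{e_i}$; $v_i$ denotes the tree induced voltages of $f_i$. *)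

theory Defs
  imports Complex_Main
begin

text \<open>Graphs: vertex set V, edge set E (edges are abstract identifiers, so parallel
edges are allowed), each edge e oriented as (src e, dst e). Vectors in R^E and R^V are
functions; only their values on E resp. V matter.\<close>

definition graph :: "'v set \<Rightarrow> 'e set \<Rightarrow> ('e \<Rightarrow> 'v) \<Rightarrow> ('e \<Rightarrow> 'v) \<Rightarrow> bool" where
  "graph V E src dst \<longleftrightarrow> finite V \<and> finite E \<and>
     (\<forall>e\<in>E. src e \<in> V \<and> dst e \<in> V \<and> src e \<noteq> dst e)"

definition adj :: "('e \<Rightarrow> 'v) \<Rightarrow> ('e \<Rightarrow> 'v) \<Rightarrow> 'e set \<Rightarrow> 'v \<Rightarrow> 'v \<Rightarrow> bool" where
  "adj src dst F x y \<longleftrightarrow> (\<exists>e\<in>F. (src e = x \<and> dst e = y) \<or> (src e = y \<and> dst e = x))"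

definition walk :: "('e \<Rightarrow> 'v) \<Rightarrow> ('e \<Rightarrow> 'v) \<Rightarrow> 'e set \<Rightarrow> 'v list \<Rightarrow> bool" where
  "walk src dst F xs \<longleftrightarrow> (\<forall>i. Suc i < length xs \<longrightarrow> adj src dst F (xs ! i) (xs ! Suc i))"

definition connected_on :: "('e \<Rightarrow> 'v) \<Rightarrow> ('e \<Rightarrow> 'v) \<Rightarrow> 'v set \<Rightarrow> 'e set \<Rightarrow> bool" where
  "connected_on src dst V F \<longleftrightarrow>
     (\<forall>a\<in>V. \<forall>b\<in>V. \<exists>xs. xs \<noteq> [] \<and> hd xs = a \<and> last xs = b \<and> walk src dst F xs)"

definition spanning_tree :: "'v set \<Rightarrow> 'e set \<Rightarrow> ('e \<Rightarrow> 'v) \<Rightarrow> ('e \<Rightarrow> 'v) \<Rightarrow> 'e set \<Rightarrow> bool" where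
  "spanning_tree V E src dst T \<longleftrightarrow> T \<subseteq> E \<and> connected_on src dst V T \<and> card T = card V - 1"

definition tree_path :: "('e \<Rightarrow> 'v) \<Rightarrow> ('e \<Rightarrow> 'v) \<Rightarrow> 'e set \<Rightarrow> 'v \<Rightarrow> 'v \<Rightarrow> 'v list" where
  "tree_path src dst T a b =
     (THE xs. xs \<noteq> [] \<and> hd xs = a \<and> last xs = b \<and> distinct xs \<and> walk src dst T xs)"

text \<open>pi_(a,b): unit flow from a to b along the tree path.\<close>
definition tree_flow :: "('e \<Rightarrow> 'v) \<Rightarrow> ('e \<Rightarrow> 'v) \<Rightarrow> 'e set \<Rightarrow> 'v \<Rightarrow> 'v \<Rightarrow> 'e \<Rightarrow> real" where
  "tree_flow src dst T a b e =
     (if e \<in> T then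
        (let p = tree_path src dst T a b in
           \<Sum>i<length p - 1.
             (if src e = p ! i \<and> dst e = p ! Suc i then 1
              else if src e = p ! Suc i \<and> dst e = p ! i then -1 else 0))
      else 0)"

definition path_edges :: "('e \<Rightarrow> 'v) \<Rightarrow> ('e \<Rightarrow> 'v) \<Rightarrow> 'e set \<Rightarrow> 'v \<Rightarrow> 'v \<Rightarrow> 'e set" where
  "path_edges src dst T a b =
     (let p = tree_path src dst T a b in
       {e\<in>T. \<exists>i. Suc i < length p \<and>
          ((src e = p ! i \<and> dst e = p ! Suc i) \<or> (src e = p ! Suc i \<and> dst e = p ! i))})"

definition res :: "('e \<Rightarrow> real) \<Rightarrow> 'e \<Rightarrow> real" where
  "res w e = 1 / w e"

definition inc :: "('e \<Rightarrow> 'v) \<Rightarrow> ('e \<Rightarrow> 'v) \<Rightarrow> 'e \<Rightarrow> 'v \<Rightarrow> real" where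
  "inc src dst e c = (if c = src e then 1 else if c = dst e then -1 else 0)"

definition energy :: "'e set \<Rightarrow> ('e \<Rightarrow> real) \<Rightarrow> ('e \<Rightarrow> real) \<Rightarrow> real" where
  "energy E w f = (\<Sum>e\<in>E. res w e * (f e)\<^sup>2)"

definition feasible :: "'v set \<Rightarrow> 'e set \<Rightarrow> ('e \<Rightarrow> 'v) \<Rightarrow> ('e \<Rightarrow> 'v) \<Rightarrow> ('v \<Rightarrow> real) \<Rightarrow> ('e \<Rightarrow> real) \<Rightarrow> bool" where
  "feasible V E src dst chi f \<longleftrightarrow> (\<forall>c\<in>V. (\<Sum>e\<in>E. inc src dst e c * f e) = chi c)"

text \<open>f*: the unique energy-minimising feasible flow (flows are vectors in R^E, i.e. zero off E).\<close>
definition opt_flow :: "'v set \<Rightarrow> 'e set \<Rightarrow> ('e \<Rightarrow> 'v) \<Rightarrow> ('e \<Rightarrow> 'v) \<Rightarrow> ('e \<Rightarrow> real) \<Rightarrow> ('v \<Rightarrow> real) \<Rightarrow> 'e \<Rightarrow> real" where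
  "opt_flow V E src dst w chi =
     (THE f. (\<forall>e. e \<notin> E \<longrightarrow> f e = 0) \<and> feasible V E src dst chi f \<and>
        (\<forall>g. (\<forall>e. e \<notin> E \<longrightarrow> g e = 0) \<longrightarrow> feasible V E src dst chi g \<longrightarrow> energy E w f \<le> energy E w g))"

definition tree_flow0 :: "'v set \<Rightarrow> 'e set \<Rightarrow> ('e \<Rightarrow> 'v) \<Rightarrow> ('e \<Rightarrow> 'v) \<Rightarrow> 'e set \<Rightarrow> ('v \<Rightarrow> real) \<Rightarrow> 'e \<Rightarrow> real" where
  "tree_flow0 V E src dst T chi =
     (THE f. (\<forall>e. e \<notin> T \<longrightarrow> f e = 0) \<and> feasible V E src dst chi f)"

definition cycle_vec :: "('e \<Rightarrow> 'v) \<Rightarrow> ('e \<Rightarrow> 'v) \<Rightarrow> 'e set \<Rightarrow> 'e \<Rightarrow> 'e \<Rightarrow> real" where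
  "cycle_vec src dst T e = (\<lambda>e'. (if e' = e then 1 else 0) - tree_flow src dst T (src e) (dst e) e')"

definition cycle_res :: "'e set \<Rightarrow> ('e \<Rightarrow> 'v) \<Rightarrow> ('e \<Rightarrow> 'v) \<Rightarrow> ('e \<Rightarrow> real) \<Rightarrow> 'e set \<Rightarrow> 'e \<Rightarrow> real" where
  "cycle_res E src dst w T e = (\<Sum>e'\<in>E. res w e' * (cycle_vec src dst T e e')\<^sup>2)"

definition Delta :: "'e set \<Rightarrow> ('e \<Rightarrow> 'v) \<Rightarrow> ('e \<Rightarrow> 'v) \<Rightarrow> ('e \<Rightarrow> real) \<Rightarrow> 'e set \<Rightarrow> 'e \<Rightarrow> ('e \<Rightarrow> real) \<Rightarrow> real" where
  "Delta E src dst w T e f = (\<Sum>e'\<in>E. f e' * res w e' * cycle_vec src dst T e e')"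

definition tcond :: "'e set \<Rightarrow> ('e \<Rightarrow> 'v) \<Rightarrow> ('e \<Rightarrow> 'v) \<Rightarrow> ('e \<Rightarrow> real) \<Rightarrow> 'e set \<Rightarrow> real" where
  "tcond E src dst w T = (\<Sum>e\<in>E - T. cycle_res E src dst w T e / res w e)"

definition stretch :: "('e \<Rightarrow> 'v) \<Rightarrow> ('e \<Rightarrow> 'v) \<Rightarrow> ('e \<Rightarrow> real) \<Rightarrow> 'e set \<Rightarrow> 'e \<Rightarrow> real" where
  "stretch src dst w T e = (1 / res w e) * (\<Sum>e'\<in>path_edges src dst T (src e) (dst e). res w e')"

definition tree_stretch :: "'e set \<Rightarrow> ('e \<Rightarrow> 'v) \<Rightarrow> ('e \<Rightarrow> 'v) \<Rightarrow> ('e \<Rightarrow> real) \<Rightarrow> 'e set \<Rightarrow> real" where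
  "tree_stretch E src dst w T = (\<Sum>e\<in>E. stretch src dst w T e)"

text \<open>Tree induced voltages with root s: v(a) = sum of r_e' f(e') over the tree path a -> s,
  each edge taken in the direction of the path (= sum_e r_e f_e pi_(a,s)(e)).\<close>
definition tree_volt :: "'e set \<Rightarrow> ('e \<Rightarrow> 'v) \<Rightarrow> ('e \<Rightarrow> 'v) \<Rightarrow> ('e \<Rightarrow> real) \<Rightarrow> 'e set \<Rightarrow> 'v \<Rightarrow> ('e \<Rightarrow> real) \<Rightarrow> 'v \<Rightarrow> real" where
  "tree_volt E src dst w T s f a = (\<Sum>e\<in>E. res w e * f e * tree_flow src dst T a s e)"

definition cyc_prob :: "'e set \<Rightarrow> ('e \<Rightarrow> 'v) \<Rightarrow> ('e \<Rightarrow> 'v) \<Rightarrow> ('e \<Rightarrow> real) \<Rightarrow> 'e set \<Rightarrow> 'e \<Rightarrow> real" where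
  "cyc_prob E src dst w T e = cycle_res E src dst w T e / (res w e * tcond E src dst w T)"

definition cyc_update :: "'e set \<Rightarrow> ('e \<Rightarrow> 'v) \<Rightarrow> ('e \<Rightarrow> 'v) \<Rightarrow> ('e \<Rightarrow> real) \<Rightarrow> 'e set \<Rightarrow> ('e \<Rightarrow> real) \<Rightarrow> 'e \<Rightarrow> 'e \<Rightarrow> real" where
  "cyc_update E src dst w T f e =
     (\<lambda>e'. f e' - Delta E src dst w T e f / cycle_res E src dst w T e * cycle_vec src dst T e e')"

text \<open>f_K as a function of the sampled edge sequence e_1,...,e_K.\<close>
definition solver_flow :: "'v set \<Rightarrow> 'e set \<Rightarrow> ('e \<Rightarrow> 'v) \<Rightarrow> ('e \<Rightarrow> 'v) \<Rightarrow> ('e \<Rightarrow> real) \<Rightarrow> 'e set \<Rightarrow> ('v \<Rightarrow> real) \<Rightarrow> 'e list \<Rightarrow> 'e \<Rightarrow> real" where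
  "solver_flow V E src dst w T chi es = foldl (cyc_update E src dst w T) (tree_flow0 V E src dst T chi) es"

text \<open>Expectation over K i.i.d. draws e_1..e_K from p on E - T.\<close>
definition solver_exp :: "'e set \<Rightarrow> ('e \<Rightarrow> 'v) \<Rightarrow> ('e \<Rightarrow> 'v) \<Rightarrow> ('e \<Rightarrow> real) \<Rightarrow> 'e set \<Rightarrow> nat \<Rightarrow> ('e list \<Rightarrow> real) \<Rightarrow> real" where
  "solver_exp E src dst w T K X =
     (\<Sum>es\<in>{es. set es \<subseteq> E - T \<and> length es = K}.
        prod_list (map (cyc_prob E src dst w T) es) * X es)"

text \<open>Laplacian, matrices on V as functions, Moore-Penrose pseudoinverse via Penrose conditions.\<close>
definition laplacian :: "'e set \<Rightarrow> ('e \<Rightarrow> 'v) \<Rightarrow> ('e \<Rightarrow> 'v) \<Rightarrow> ('e \<Rightarrow> real) \<Rightarrow> 'v \<Rightarrow> 'v \<Rightarrow> real" where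
  "laplacian E src dst w a b = (\<Sum>e\<in>E. inc src dst e a * (1 / res w e) * inc src dst e b)"

definition matmul :: "'v set \<Rightarrow> ('v \<Rightarrow> 'v \<Rightarrow> real) \<Rightarrow> ('v \<Rightarrow> 'v \<Rightarrow> real) \<Rightarrow> 'v \<Rightarrow> 'v \<Rightarrow> real" where
  "matmul V A B a b = (\<Sum>c\<in>V. A a c * B c b)"

definition pinv :: "'v set \<Rightarrow> ('v \<Rightarrow> 'v \<Rightarrow> real) \<Rightarrow> 'v \<Rightarrow> 'v \<Rightarrow> real" where
  "pinv V A = (THE M. (\<forall>a b. a \<notin> V \<or> b \<notin> V \<longrightarrow> M a b = 0) \<and>
     (\<forall>a\<in>V. \<forall>b\<in>V.
        matmul V (matmul V A M) A a b = A a b \<and>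
        matmul V (matmul V M A) M a b = M a b \<and>
        matmul V A M a b = matmul V A M b a \<and>
        matmul V M A a b = matmul V M A b a))"

definition mvec :: "'v set \<Rightarrow> ('v \<Rightarrow> 'v \<Rightarrow> real) \<Rightarrow> ('v \<Rightarrow> real) \<Rightarrow> 'v \<Rightarrow> real" where
  "mvec V M x a = (\<Sum>b\<in>V. M a b * x b)"

definition mnorm :: "'v set \<Rightarrow> ('v \<Rightarrow> 'v \<Rightarrow> real) \<Rightarrow> ('v \<Rightarrow> real) \<Rightarrow> real" where
  "mnorm V M x = sqrt (\<Sum>a\<in>V. \<Sum>b\<in>V. x a * M a b * x b)"

end

theory Submission
  imports Defs "HOL-Library.Function_Algebras" "HOL-Analysis.Convex"
begin

text \<open>
  The optimal flow f* is the potential flow of L^+\<chi>, so f* is orthogonal (in the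
  r-inner product) to every circulation, in particular to every tree cycle c_e.
  A cycle update along c_e lowers the energy by \<Delta>_e(f)^2/R_e. Since f - f* is a
  circulation, it is the combination of the c_e with coefficients f(e) - f*(e) on the
  off-tree edges, and Cauchy-Schwarz gives \<xi>(f) - \<xi>(f*) \<le> \<Sum>_e \<Delta>_e(f)^2/r_e.
  Sampling e with probability R_e/(r_e \<tau>) therefore shrinks the expected energy gap by the
  factor 1 - 1/\<tau> per step. The initial tree flow has energy at most st(T) \<xi>(f*),
  so after K steps the expected gap is at most \<epsilon> \<xi>(f*)/\<tau>. Finally the squared
  L-norm of the error of the tree induced voltages is at most \<tau> times the energy gap,
  and E X \<le> sqrt (E X^2) gives the voltage bound.
\<close>

section \<open>Walks and trees\<close>

lemma adj_sym: "adj src dst F x y = adj src dst F y x"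
  unfolding adj_def by blast

lemma walk_Nil[simp]: "walk src dst F []"
  unfolding walk_def by simp

lemma walk_single[simp]: "walk src dst F [x]"
  unfolding walk_def by simp

lemma walk_Cons2[simp]:
  "walk src dst F (x # y # xs) \<longleftrightarrow> adj src dst F x y \<and> walk src dst F (y # xs)"
  unfolding walk_def
proof safe
  assume h: "\<forall>i. Suc i < length (x # y # xs) \<longrightarrow> adj src dst F ((x # y # xs) ! i) ((x # y # xs) ! Suc i)"
  show "adj src dst F x y" using h[rule_format, of 0] by simp
  fix i assume "Suc i < length (y # xs)"
  then show "adj src dst F ((y # xs) ! i) ((y # xs) ! Suc i)" using h[rule_format, of "Suc i"] by simp
next
  fix i
  assume a: "adj src dst F x y"
    and h: "\<forall>i. Suc i < length (y # xs) \<longrightarrow> adj src dst F ((y # xs) ! i) ((y # xs) ! Suc i)"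
    and i: "Suc i < length (x # y # xs)"
  show "adj src dst F ((x # y # xs) ! i) ((x # y # xs) ! Suc i)"
  proof (cases i)
    case 0 then show ?thesis using a by simp
  next
    case (Suc j) then show ?thesis using h[rule_format, of j] i by simp
  qed
qed

lemma walk_Cons:
  "walk src dst F (x # xs) \<longleftrightarrow> (xs = [] \<or> adj src dst F x (hd xs)) \<and> walk src dst F xs"
  by (cases xs) auto

lemma walk_append:
  "walk src dst F (xs @ ys) \<longleftrightarrow> walk src dst F xs \<and> walk src dst F ys \<and>
     (xs \<noteq> [] \<longrightarrow> ys \<noteq> [] \<longrightarrow> adj src dst F (last xs) (hd ys))"
  by (induction xs) (auto simp: walk_Cons)

lemma walk_rev: "walk src dst F (rev xs) \<longleftrightarrow> walk src dst F xs"
proof (induction xs)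
  case (Cons x xs)
  have "walk src dst F (rev (x # xs)) \<longleftrightarrow> walk src dst F (rev xs) \<and> (xs \<noteq> [] \<longrightarrow> adj src dst F (hd xs) x)"
    by (simp add: walk_append last_rev)
  also have "\<dots> \<longleftrightarrow> walk src dst F (x # xs)"
    using Cons adj_sym[of src dst F "hd xs" x] by (auto simp: walk_Cons)
  finally show ?case .
qed simp

lemma walk_set:
  assumes "walk src dst F xs" "xs \<noteq> []" "hd xs \<in> V" "\<forall>e\<in>F. src e \<in> V \<and> dst e \<in> V"
  shows "set xs \<subseteq> V"
  using assms
proof (induction xs rule: induct_list012)
  case (3 x y zs)
  have "adj src dst F x y" using 3 by simp
  then have "y \<in> V" using 3(6) unfolding adj_def by auto
  then have "set (y # zs) \<subseteq> V" using 3 by auto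
  then show ?case using 3 by auto
qed auto

lemma walk_distinct:
  assumes "walk src dst F xs" "xs \<noteq> []"
  shows "\<exists>ys. ys \<noteq> [] \<and> hd ys = hd xs \<and> last ys = last xs \<and> distinct ys \<and> walk src dst F ys
              \<and> set ys \<subseteq> set xs"
  using assms
proof (induction "length xs" arbitrary: xs rule: less_induct)
  case less
  show ?case
  proof (cases "distinct xs")
    case True then show ?thesis using less by blast
  next
    case False
    then obtain as x bs cs where xs: "xs = as @ [x] @ bs @ [x] @ cs"
      using not_distinct_decomp by blast
    define zs where "zs = as @ [x] @ cs"
    have "length zs < length xs" unfolding zs_def xs by simp
    moreover have "walk src dst F zs"
    proof -
      have w: "walk src dst F ((as @ [x] @ bs) @ (x # cs))" using less(2) unfolding xs by simp
      then have "walk src dst F (x # cs)" by (simp only: walk_append)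
      moreover have "walk src dst F (as @ [x])" using w by (simp only: walk_append append_assoc[symmetric]) blast
      ultimately show ?thesis unfolding zs_def using walk_append[of src dst F "as @ [x]" cs]
        by (auto simp: walk_Cons)
    qed
    moreover have "zs \<noteq> []" unfolding zs_def by simp
    ultimately obtain ys where ys: "ys \<noteq> [] \<and> hd ys = hd zs \<and> last ys = last zs \<and> distinct ys
        \<and> walk src dst F ys \<and> set ys \<subseteq> set zs"
      using less(1) by blast
    have h1: "hd zs = hd xs" unfolding zs_def xs by (cases as) auto
    have h2: "last zs = last xs" unfolding zs_def xs by (cases cs) auto
    have h3: "set zs \<subseteq> set xs" unfolding zs_def xs by auto
    show ?thesis using ys h1 h2 h3 by (intro exI[of _ ys]) auto
  qed
qed

lemma distinct_adjacent_pair_unique: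
  assumes "distinct p" "Suc i < length p" "Suc j < length p" "{p ! i, p ! Suc i} = {p ! j, p ! Suc j}"
  shows "i = j"
proof -
  have inj: "p ! x = p ! y \<Longrightarrow> x < length p \<Longrightarrow> y < length p \<Longrightarrow> x = y" for x y
    using assms(1) by (simp add: nth_eq_iff_index_eq)
  have "p ! i = p ! j \<or> (p ! i = p ! Suc j \<and> p ! Suc i = p ! j)"
    using assms(4) by (auto simp: doubleton_eq_iff)
  then show ?thesis
  proof
    assume "p ! i = p ! Suc j \<and> p ! Suc i = p ! j"
    then have "i = Suc j" "Suc i = j" using inj[of i "Suc j"] inj[of "Suc i" j] assms(2,3) by auto
    then show ?thesis by simp
  qed (use inj assms(2,3) in simp)
qed

lemma distinct_singleton_set:
  assumes "distinct xs" "xs \<noteq> []" "set xs \<subseteq> {a}"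
  shows "xs = [a]"
  using assms by (cases xs) (auto simp: subset_singleton_iff)

lemma distinct_hd_last:
  assumes "distinct xs" "xs \<noteq> []" "hd xs = last xs"
  shows "xs = [hd xs]"
proof (cases xs)
  case (Cons y ys)
  show ?thesis
  proof (cases ys)
    case (Cons z zs)
    then have "last xs \<in> set ys" using \<open>xs = y # ys\<close> by simp
    then show ?thesis using assms \<open>xs = y # ys\<close> by simp
  qed (use Cons in simp)
qed (use assms in simp)

definition is_tree :: "'v set \<Rightarrow> 'e set \<Rightarrow> ('e \<Rightarrow> 'v) \<Rightarrow> ('e \<Rightarrow> 'v) \<Rightarrow> bool" where
  "is_tree V F src dst \<longleftrightarrow> finite V \<and> finite F \<and> V \<noteq> {} \<and>
     (\<forall>e\<in>F. src e \<in> V \<and> dst e \<in> V \<and> src e \<noteq> dst e) \<and>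
     connected_on src dst V F \<and> card F = card V - 1"

lemma card_filter_eq_sum:
  assumes "finite A"
  shows "card {x\<in>A. P x} = (\<Sum>x\<in>A. if P x then 1 else 0)"
proof -
  have "card {x\<in>A. P x} = (\<Sum>x\<in>{x\<in>A. P x}. 1)" by simp
  also have "\<dots> = (\<Sum>x\<in>A. if P x then 1 else 0)" using assms by (rule sum.inter_filter)
  finally show ?thesis .
qed

lemma sum_degree_eq_twice_card:
  assumes "finite V" "finite F" "\<forall>e\<in>F. src e \<in> V \<and> dst e \<in> V \<and> src e \<noteq> dst e"
  shows "(\<Sum>v\<in>V. card {e\<in>F. src e = v \<or> dst e = v}) = 2 * card F"
proof -
  have "(\<Sum>v\<in>V. card {e\<in>F. src e = v \<or> dst e = v})
      = (\<Sum>v\<in>V. \<Sum>e\<in>F. if src e = v \<or> dst e = v then 1 else 0)"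
    using assms by (simp add: card_filter_eq_sum)
  also have "\<dots> = (\<Sum>e\<in>F. \<Sum>v\<in>V. if src e = v \<or> dst e = v then 1 else 0)"
    by (rule sum.swap)
  also have "\<dots> = (\<Sum>e\<in>F. 2)"
  proof (rule sum.cong[OF refl])
    fix e assume e: "e \<in> F"
    have "(\<Sum>v\<in>V. if src e = v \<or> dst e = v then 1 else 0) = card {v\<in>V. src e = v \<or> dst e = v}"
      using assms by (simp add: card_filter_eq_sum)
    also have "{v\<in>V. src e = v \<or> dst e = v} = {src e, dst e}" using assms e by auto
    also have "card {src e, dst e} = 2" using assms e by auto
    finally show "(\<Sum>v\<in>V. if src e = v \<or> dst e = v then (1::nat) else 0) = 2" .
  qed
  finally show ?thesis by simp
qed

lemma adj_leaf_neighbour: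
  assumes "adj src dst F x l" "\<forall>e'\<in>F. src e' = l \<or> dst e' = l \<longrightarrow> e' = e" "src e \<noteq> dst e"
  shows "x = (if src e = l then dst e else src e)"
  using assms unfolding adj_def by auto

lemma walk_remove_edge:
  assumes "walk src dst F ys" "l \<notin> set ys" "src e = l \<or> dst e = l"
  shows "walk src dst (F - {e}) ys"
  unfolding walk_def
proof (intro allI impI)
  fix i assume i: "Suc i < length ys"
  then have "adj src dst F (ys ! i) (ys ! Suc i)" using assms(1) unfolding walk_def by blast
  then obtain e' where e': "e' \<in> F" "(src e' = ys ! i \<and> dst e' = ys ! Suc i) \<or> (src e' = ys ! Suc i \<and> dst e' = ys ! i)"
    unfolding adj_def by blast
  have "ys ! i \<in> set ys" "ys ! Suc i \<in> set ys" using i by auto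
  then have "e' \<noteq> e" using e' assms(2,3) by auto
  then show "adj src dst (F - {e}) (ys ! i) (ys ! Suc i)" using e' unfolding adj_def by blast
qed

lemma leaf_at_end_of_distinct_walk:
  assumes "walk src dst F zs" "distinct zs" "l \<in> set zs"
    "\<forall>e'\<in>F. src e' = l \<or> dst e' = l \<longrightarrow> e' = e" "src e \<noteq> dst e"
  shows "hd zs = l \<or> last zs = l"
proof -
  obtain i where i: "i < length zs" "zs ! i = l" using assms(3) by (metis in_set_conv_nth)
  have ne: "zs \<noteq> []" using assms(3) by auto
  show ?thesis
  proof (cases "i = 0")
    case True then show ?thesis using i ne by (simp add: hd_conv_nth)
  next
    case False
    show ?thesis
    proof (cases "Suc i = length zs")
      case True
      then have "length zs - 1 = i" by simp
      then show ?thesis using i ne by (simp add: last_conv_nth)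
    next
      case False2: False
      obtain j where j: "i = Suc j" using False by (cases i) auto
      have a1: "adj src dst F (zs ! j) l" using assms(1) i j unfolding walk_def by auto
      have a2: "adj src dst F (zs ! Suc i) l"
        using assms(1) i False2 unfolding walk_def by (metis Suc_lessI adj_sym)
      have "zs ! j = zs ! Suc i"
        using adj_leaf_neighbour[OF a1 assms(4,5)] adj_leaf_neighbour[OF a2 assms(4,5)] by simp
      moreover have "Suc i < length zs" using i False2 by simp
      ultimately have "j = Suc i" using assms(2) i j by (simp add: nth_eq_iff_index_eq)
      then show ?thesis using j by simp
    qed
  qed
qed

lemma tree_has_leaf:
  assumes t: "is_tree V F src dst" and c2: "2 \<le> card V"
  shows "\<exists>l\<in>V. \<exists>e\<in>F. (src e = l \<or> dst e = l) \<and> (\<forall>e'\<in>F. src e' = l \<or> dst e' = l \<longrightarrow> e' = e)"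
proof -
  have fin: "finite V" "finite F" and ends: "\<forall>e\<in>F. src e \<in> V \<and> dst e \<in> V \<and> src e \<noteq> dst e"
    and conn: "connected_on src dst V F" and cardF: "card F = card V - 1"
    using t unfolding is_tree_def by auto
  define deg where "deg v = card {e\<in>F. src e = v \<or> dst e = v}" for v
  have ds: "(\<Sum>v\<in>V. deg v) = 2 * card F" unfolding deg_def using sum_degree_eq_twice_card[OF fin ends] .
  obtain l where l: "l \<in> V" "deg l \<le> 1"
  proof -
    { assume "\<forall>v\<in>V. 2 \<le> deg v"
      then have "(\<Sum>v\<in>V. (2::nat)) \<le> (\<Sum>v\<in>V. deg v)" by (intro sum_mono) auto
      then have False using ds cardF c2 by simp }
    then show ?thesis using that by force
  qed
  obtain b where b: "b \<in> V" "b \<noteq> l"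
  proof -
    { assume "\<forall>b\<in>V. b = l"
      then have "card V \<le> 1" using card_mono[of "{l}" V] by auto
      then have False using c2 by simp }
    then show ?thesis using that by blast
  qed
  obtain xs where xs: "xs \<noteq> []" "hd xs = l" "last xs = b" "walk src dst F xs"
    using conn l(1) b(1) unfolding connected_on_def by blast
  obtain y ys where "xs = l # y # ys"
    using xs b(2) by (cases xs; cases "tl xs") auto
  then have "adj src dst F l y" using xs(4) by simp
  then obtain e where e: "e \<in> F" "src e = l \<or> dst e = l" unfolding adj_def by auto
  have "{e'\<in>F. src e' = l \<or> dst e' = l} = {e}"
    using l(2) e fin card_le_Suc0_iff_eq[of "{e'\<in>F. src e' = l \<or> dst e' = l}"]
    unfolding deg_def by auto
  then show ?thesis using l(1) e by blast
qed

lemma connected_remove_leaf: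
  assumes conn: "connected_on src dst V F" and e: "src e = l \<or> dst e = l" "src e \<noteq> dst e"
    and uniq: "\<forall>e'\<in>F. src e' = l \<or> dst e' = l \<longrightarrow> e' = e"
  shows "connected_on src dst (V - {l}) (F - {e})"
  unfolding connected_on_def
proof (intro ballI)
  fix a c assume a: "a \<in> V - {l}" and c: "c \<in> V - {l}"
  obtain zs where zs: "zs \<noteq> []" "hd zs = a" "last zs = c" "walk src dst F zs"
    using conn a c unfolding connected_on_def by blast
  obtain qs where qs: "qs \<noteq> []" "hd qs = a" "last qs = c" "distinct qs" "walk src dst F qs"
    using walk_distinct[OF zs(4,1)] zs by auto
  have "l \<notin> set qs"
    using leaf_at_end_of_distinct_walk[OF qs(5) qs(4) _ uniq e(2)] qs a c by auto
  then have "walk src dst (F - {e}) qs" using walk_remove_edge[OF qs(5) _ e(1)] by blast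
  then show "\<exists>xs. xs \<noteq> [] \<and> hd xs = a \<and> last xs = c \<and> walk src dst (F - {e}) xs"
    using qs by blast
qed

lemma tree_remove_leaf:
  assumes t: "is_tree V F src dst" and c2: "2 \<le> card V"
  obtains l e where "l \<in> V" "e \<in> F" "src e = l \<or> dst e = l"
    "\<forall>e'\<in>F. src e' = l \<or> dst e' = l \<longrightarrow> e' = e" "is_tree (V - {l}) (F - {e}) src dst"
proof -
  obtain l e where l: "l \<in> V" and e: "e \<in> F" "src e = l \<or> dst e = l"
    and uniq: "\<forall>e'\<in>F. src e' = l \<or> dst e' = l \<longrightarrow> e' = e"
    using tree_has_leaf[OF t c2] by blast
  have ends: "\<forall>e\<in>F. src e \<in> V \<and> dst e \<in> V \<and> src e \<noteq> dst e" and fin: "finite V" "finite F"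
    using t unfolding is_tree_def by auto
  have "is_tree (V - {l}) (F - {e}) src dst"
    unfolding is_tree_def
  proof (intro conjI)
    show "finite (V - {l})" "finite (F - {e})" using fin by auto
    show "V - {l} \<noteq> {}" using c2 card_mono[of "{l}" V] by auto
    show "\<forall>e'\<in>F - {e}. src e' \<in> V - {l} \<and> dst e' \<in> V - {l} \<and> src e' \<noteq> dst e'"
      using ends uniq by auto
    show "card (F - {e}) = card (V - {l}) - 1"
      using t e(1) l fin unfolding is_tree_def by (simp add: card_Diff_singleton)
    show "connected_on src dst (V - {l}) (F - {e})"
      using connected_remove_leaf[OF _ e(2) _ uniq] t ends e(1) unfolding is_tree_def by blast
  qed
  then show ?thesis using that l e uniq by blast
qed

lemma tree_single_vertex:
  assumes "is_tree V F src dst" "\<not> 2 \<le> card V"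
  shows "\<exists>a. V = {a}" "F = {}"
proof -
  have "finite V" "V \<noteq> {}" "finite F" "card F = card V - 1" using assms unfolding is_tree_def by auto
  moreover have "0 < card V" using \<open>finite V\<close> \<open>V \<noteq> {}\<close> by (simp add: card_gt_0_iff)
  ultimately have "card V = 1" using assms(2) by linarith
  then show "\<exists>a. V = {a}" by (simp add: card_1_singleton_iff)
  show "F = {}" using \<open>card V = 1\<close> \<open>card F = card V - 1\<close> \<open>finite F\<close> by simp
qed

lemma walk_from_leaf:
  assumes "walk src dst F (l # zs)" "l \<notin> set zs" "zs \<noteq> []"
    and e: "src e = l \<or> dst e = l" "src e \<noteq> dst e"
    and uniq: "\<forall>e'\<in>F. src e' = l \<or> dst e' = l \<longrightarrow> e' = e"
  shows "hd zs = (if src e = l then dst e else src e)" "walk src dst (F - {e}) zs"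
proof -
  have "walk src dst F zs" "adj src dst F (hd zs) l"
    using assms(1,3) adj_sym[of src dst F l "hd zs"] by (auto simp: walk_Cons)
  then show "hd zs = (if src e = l then dst e else src e)" "walk src dst (F - {e}) zs"
    using adj_leaf_neighbour[OF _ uniq e(2)] walk_remove_edge[of src dst F zs l e] assms(2) e(1) by auto
qed

lemma tree_distinct_walk_unique:
  assumes "is_tree V F src dst" "walk src dst F xs" "walk src dst F ys" "distinct xs" "distinct ys"
    "xs \<noteq> []" "ys \<noteq> []" "hd xs = hd ys" "last xs = last ys" "hd xs \<in> V"
  shows "xs = ys"
  using assms
proof (induction "card V" arbitrary: V F xs ys rule: less_induct)
  case less
  have edge_ends: "\<forall>e\<in>F. src e \<in> V \<and> dst e \<in> V" using less(2) unfolding is_tree_def by auto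
  show ?case
  proof (cases "2 \<le> card V")
    case False
    obtain a where V: "V = {a}" using tree_single_vertex[OF less(2) False] by blast
    have "set xs \<subseteq> {a}" "set ys \<subseteq> {a}"
      using walk_set[OF less(3) less(7) less(11) edge_ends] walk_set[OF less(4) less(8)] less(9) less(11)
        edge_ends V by auto
    then show ?thesis using distinct_singleton_set less(5-8) by metis
  next
    case True
    obtain l e where le: "l \<in> V" "e \<in> F" "src e = l \<or> dst e = l"
      and uniq: "\<forall>e'\<in>F. src e' = l \<or> dst e' = l \<longrightarrow> e' = e"
      and t': "is_tree (V - {l}) (F - {e}) src dst"
      by (rule tree_remove_leaf[OF less(2) True])
    have se: "src e \<noteq> dst e" using less(2) le unfolding is_tree_def by auto
    have fin: "finite V" using less(2) unfolding is_tree_def by auto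
    have cless: "card (V - {l}) < card V" using card_Diff1_less[OF fin(1) le(1)] .
    define u where "u = (if src e = l then dst e else src e)"
    have uV: "u \<in> V - {l}" using edge_ends le se unfolding u_def by auto
    have H: "zs1 = zs2" if z: "walk src dst F zs1" "walk src dst F zs2" "distinct zs1" "distinct zs2"
       "zs1 \<noteq> []" "zs2 \<noteq> []" "hd zs1 = l" "hd zs2 = l" "last zs1 = last zs2" for zs1 zs2
    proof (cases "last zs1 = l")
      case True
      then show ?thesis using distinct_hd_last[of zs1] distinct_hd_last[of zs2] z by metis
    next
      case False
      obtain zs1' where z1: "zs1 = l # zs1'" using z(5,7) by (cases zs1) auto
      obtain zs2' where z2: "zs2 = l # zs2'" using z(6,8) by (cases zs2) auto
      have "zs1' \<noteq> []" "zs2' \<noteq> []" using False z(9) z1 z2 by auto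
      then have "hd zs1' = u" "walk src dst (F - {e}) zs1'" "hd zs2' = u" "walk src dst (F - {e}) zs2'"
        using walk_from_leaf[OF _ _ _ le(3) se uniq, of zs1'] walk_from_leaf[OF _ _ _ le(3) se uniq, of zs2']
          z z1 z2 unfolding u_def by auto
      then have "zs1' = zs2'"
        using less(1)[OF cless t', of zs1' zs2'] z z1 z2 \<open>zs1' \<noteq> []\<close> \<open>zs2' \<noteq> []\<close> uV by auto
      then show ?thesis using z1 z2 by simp
    qed
    show ?thesis
    proof (cases "l \<in> set xs \<or> l \<in> set ys")
      case True
      then have "hd xs = l \<or> last xs = l"
        using leaf_at_end_of_distinct_walk[OF less(3) less(5) _ uniq se] leaf_at_end_of_distinct_walk[OF less(4) less(6) _ uniq se]
          less(9,10) by auto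
      then show ?thesis
      proof
        assume "hd xs = l" then show ?thesis using H[of xs ys] less by auto
      next
        assume lx: "last xs = l"
        have "rev xs = rev ys"
          by (rule H) (use less lx in \<open>auto simp: walk_rev hd_rev last_rev\<close>)
        then show ?thesis by simp
      qed
    next
      case False
      have "hd xs \<in> V - {l}" using False less(11) less(7) by (cases xs) auto
      then show ?thesis
        using less(1)[OF cless t' walk_remove_edge[OF less(3) _ le(3)] walk_remove_edge[OF less(4) _ le(3)]] less False
        by auto
    qed
  qed
qed

lemma tree_circulation_zero:
  assumes "is_tree V F src dst" "\<forall>c\<in>V. (\<Sum>e\<in>F. inc src dst e c * g e) = 0" "e \<in> F"
  shows "g e = 0"
  using assms
proof (induction "card V" arbitrary: V F e rule: less_induct)
  case less
  show ?case
  proof (cases "2 \<le> card V")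
    case False
    then show ?thesis using tree_single_vertex(2)[OF less(2) False] less(4) by simp
  next
    case True
    obtain l e0 where le: "l \<in> V" "e0 \<in> F" "src e0 = l \<or> dst e0 = l"
      and uniq: "\<forall>e'\<in>F. src e' = l \<or> dst e' = l \<longrightarrow> e' = e0"
      and t': "is_tree (V - {l}) (F - {e0}) src dst"
      by (rule tree_remove_leaf[OF less(2) True])
    have se: "src e0 \<noteq> dst e0" using less(2) le unfolding is_tree_def by auto
    have fin: "finite V" "finite F" using less(2) unfolding is_tree_def by auto
    have cless: "card (V - {l}) < card V" using card_Diff1_less[OF fin(1) le(1)] .
    have "(\<Sum>e\<in>F. inc src dst e l * g e) = inc src dst e0 l * g e0 + (\<Sum>e\<in>F - {e0}. inc src dst e l * g e)"
      using fin le(2) by (simp add: sum.remove)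
    also have "(\<Sum>e\<in>F - {e0}. inc src dst e l * g e) = 0"
      using uniq by (intro sum.neutral) (auto simp: inc_def)
    finally have "inc src dst e0 l * g e0 = 0" using less(3) le(1) by simp
    moreover have "inc src dst e0 l \<noteq> 0" using le(3) se by (auto simp: inc_def)
    ultimately have g0: "g e0 = 0" by simp
    show ?thesis
    proof (cases "e = e0")
      case True then show ?thesis using g0 by simp
    next
      case False
      have "\<forall>c\<in>V - {l}. (\<Sum>e\<in>F - {e0}. inc src dst e c * g e) = 0"
      proof
        fix c assume c: "c \<in> V - {l}"
        have "(\<Sum>e\<in>F. inc src dst e c * g e) = inc src dst e0 c * g e0 + (\<Sum>e\<in>F - {e0}. inc src dst e c * g e)"
          using fin le(2) by (simp add: sum.remove)
        then show "(\<Sum>e\<in>F - {e0}. inc src dst e c * g e) = 0" using less(3) c g0 by simp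
      qed
      then show ?thesis using less(1)[OF cless t'] less(4) False by auto
    qed
  qed
qed

lemma tree_path_ex1:
  assumes "is_tree V F src dst" "a \<in> V" "b \<in> V"
  shows "\<exists>!xs. xs \<noteq> [] \<and> hd xs = a \<and> last xs = b \<and> distinct xs \<and> walk src dst F xs"
proof -
  obtain zs where zs: "zs \<noteq> []" "hd zs = a" "last zs = b" "walk src dst F zs"
    using assms unfolding is_tree_def connected_on_def by blast
  obtain qs where qs: "qs \<noteq> []" "hd qs = a" "last qs = b" "distinct qs" "walk src dst F qs"
    using walk_distinct[OF zs(4,1)] zs by auto
  show ?thesis
  proof (rule ex1I[of _ qs])
    show "qs \<noteq> [] \<and> hd qs = a \<and> last qs = b \<and> distinct qs \<and> walk src dst F qs" using qs by blast
    fix ys assume "ys \<noteq> [] \<and> hd ys = a \<and> last ys = b \<and> distinct ys \<and> walk src dst F ys"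
    then show "ys = qs" using tree_distinct_walk_unique[OF assms(1), of ys qs] qs assms by auto
  qed
qed

lemma walk_const_potential:
  assumes "walk src dst F zs" "\<forall>e\<in>F. x (src e) = x (dst e)" "zs \<noteq> []"
  shows "x (hd zs) = x (last zs)"
  using assms
proof (induction zs rule: induct_list012)
  case (3 a b zs)
  have "adj src dst F a b" using 3 by simp
  then have "x a = x b" using 3(4) unfolding adj_def by auto
  then show ?case using 3 by simp
qed auto

section \<open>Linear algebra and elementary inequalities\<close>

lemma (in vector_space) independent_card_le_imp_span:
  assumes "finite D" "independent C" "C \<subseteq> span D" "card D \<le> card C"
  shows "D \<subseteq> span C"
proof
  fix d assume d: "d \<in> D"
  show "d \<in> span C"
  proof (rule ccontr)
    assume nd: "d \<notin> span C"
    have "insert d C \<subseteq> span D" using assms(3) span_base[OF d] by blast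
    from independent_span_bound[OF assms(1) independent_insertI[OF nd assms(2)] this]
    have "finite C" "card (insert d C) \<le> card D" by auto
    moreover have "d \<notin> C" using nd span_base by blast
    ultimately show False using assms(4) by simp
  qed
qed

context
begin

interpretation fun_vs: vector_space "\<lambda>(c::real) (f::'a \<Rightarrow> real) x. c * f x"
  by unfold_locales (auto simp: fun_eq_iff algebra_simps)

lemma sum_fun_apply: "(\<Sum>i\<in>I. (F i :: 'a \<Rightarrow> 'b::comm_monoid_add)) x = (\<Sum>i\<in>I. F i x)"
  by (induction I rule: infinite_finite_induct) auto

lemma fun_vs_span_deltas:
  assumes "finite V" "\<forall>a. a \<notin> V \<longrightarrow> z a = 0"
  shows "z \<in> fun_vs.span ((\<lambda>b a. if a = b then 1 else 0) ` V)"
proof -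
  have "(\<Sum>b\<in>V. (\<lambda>a. z b * (if a = b then 1 else 0))) = z"
  proof
    fix a
    have "(\<Sum>b\<in>V. (\<lambda>a. z b * (if a = b then 1 else 0))) a = (\<Sum>b\<in>V. if a = b then z b else 0)"
      unfolding sum_fun_apply by (intro sum.cong) auto
    also have "\<dots> = z a" using assms by (simp add: sum.delta)
    finally show "(\<Sum>b\<in>V. (\<lambda>a. z b * (if a = b then 1 else 0))) a = z a" .
  qed
  moreover have "(\<Sum>b\<in>V. (\<lambda>a. z b * (if a = b then 1 else 0))) \<in> fun_vs.span ((\<lambda>b a. if a = b then 1 else 0) ` V)"
    by (intro fun_vs.span_sum fun_vs.span_scale fun_vs.span_base) auto
  ultimately show ?thesis by simp
qed

definition matrix_col :: "'v set \<Rightarrow> ('v \<Rightarrow> 'v \<Rightarrow> real) \<Rightarrow> 'v \<Rightarrow> 'v \<Rightarrow> real" where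
  "matrix_col V A b = (\<lambda>a. if a \<in> V then A a b else 0)"

lemma sum_matrix_col_combination:
  assumes "finite V" "inj_on (matrix_col V A) V" "t \<subseteq> matrix_col V A ` V" "a \<in> V"
  shows "(\<Sum>v\<in>t. u v * v a) = (\<Sum>b\<in>V. A a b * (if matrix_col V A b \<in> t then u (matrix_col V A b) else 0))"
proof -
  let ?col = "matrix_col V A"
  define B where "B = {b\<in>V. ?col b \<in> t}"
  have tB: "t = ?col ` B" using assms(3) unfolding B_def by auto
  have "inj_on ?col B" using assms(2) unfolding B_def by (auto intro: inj_on_subset)
  then have "(\<Sum>v\<in>t. u v * v a) = (\<Sum>b\<in>B. u (?col b) * ?col b a)"
    unfolding tB by (simp add: sum.reindex)
  also have "\<dots> = (\<Sum>b\<in>B. A a b * u (?col b))" using assms(4) by (simp add: matrix_col_def mult.commute)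
  also have "\<dots> = (\<Sum>b\<in>V. if ?col b \<in> t then A a b * u (?col b) else 0)"
    using assms(1) unfolding B_def by (rule sum.inter_filter)
  finally show ?thesis by (simp add: if_distrib cong: if_cong)
qed

lemma matrix_col_inj:
  fixes A :: "'v \<Rightarrow> 'v \<Rightarrow> real"
  assumes fin: "finite V"
    and inj: "\<forall>x. (\<forall>a\<in>V. (\<Sum>b\<in>V. A a b * x b) = 0) \<longrightarrow> (\<forall>a\<in>V. x a = 0)"
  shows "inj_on (matrix_col V A) V"
proof (rule inj_onI)
  fix b1 b2 assume b: "b1 \<in> V" "b2 \<in> V" "matrix_col V A b1 = matrix_col V A b2"
  define x where "x c = (if c = b1 then 1 else 0) - (if c = b2 then 1 else (0::real))" for c
  have "\<forall>a\<in>V. (\<Sum>b\<in>V. A a b * x b) = 0"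
  proof
    fix a assume a: "a \<in> V"
    have "(\<Sum>b\<in>V. A a b * x b) = (\<Sum>b\<in>V. (if b = b1 then A a b else 0) - (if b = b2 then A a b else 0))"
      unfolding x_def by (intro sum.cong) auto
    also have "\<dots> = matrix_col V A b1 a - matrix_col V A b2 a"
      using fin a b(1,2) by (simp add: sum_subtractf matrix_col_def)
    also have "\<dots> = 0" using b(3) by simp
    finally show "(\<Sum>b\<in>V. A a b * x b) = 0" .
  qed
  then have "x b1 = 0" using inj b by blast
  then show "b1 = b2" unfolding x_def by (auto split: if_splits)
qed

lemma matrix_col_independent:
  fixes A :: "'v \<Rightarrow> 'v \<Rightarrow> real"
  assumes fin: "finite V"
    and inj: "\<forall>x. (\<forall>a\<in>V. (\<Sum>b\<in>V. A a b * x b) = 0) \<longrightarrow> (\<forall>a\<in>V. x a = 0)"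
  shows "fun_vs.independent (matrix_col V A ` V)"
proof
  let ?col = "matrix_col V A"
  assume "fun_vs.dependent (?col ` V)"
  then obtain t u where tu: "finite t" "t \<subseteq> ?col ` V" "(\<Sum>v\<in>t. (\<lambda>x. u v * v x)) = 0" "\<exists>v\<in>t. u v \<noteq> 0"
    unfolding fun_vs.dependent_explicit by blast
  define x where "x b = (if ?col b \<in> t then u (?col b) else 0)" for b
  have "\<forall>a\<in>V. (\<Sum>b\<in>V. A a b * x b) = 0"
  proof
    fix a assume a: "a \<in> V"
    have "(\<Sum>b\<in>V. A a b * x b) = (\<Sum>v\<in>t. (\<lambda>x. u v * v x)) a"
      using sum_matrix_col_combination[OF fin matrix_col_inj[OF fin inj] tu(2) a]
      unfolding x_def sum_fun_apply by simp
    then show "(\<Sum>b\<in>V. A a b * x b) = 0" using tu(3) by simp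
  qed
  then have x0: "\<forall>a\<in>V. x a = 0" using inj by blast
  obtain b where "b \<in> V" "?col b \<in> t" "u (?col b) \<noteq> 0" using tu(2,4) by blast
  then show False using x0 unfolding x_def by auto
qed

text \<open>Rank argument: the |V| independent columns span the |V|-dimensional space of functions on V.\<close>
lemma square_matrix_inj_imp_surj:
  fixes A :: "'v \<Rightarrow> 'v \<Rightarrow> real" and y :: "'v \<Rightarrow> real"
  assumes fin: "finite V"
    and inj: "\<forall>x. (\<forall>a\<in>V. (\<Sum>b\<in>V. A a b * x b) = 0) \<longrightarrow> (\<forall>a\<in>V. x a = 0)"
  shows "\<exists>x. \<forall>a\<in>V. (\<Sum>b\<in>V. A a b * x b) = y a"
proof -
  let ?col = "matrix_col V A" and ?D = "(\<lambda>b a. if a = b then 1 else 0) ` V"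
  define y' where "y' = (\<lambda>a. if a \<in> V then y a else 0)"
  have colinj: "inj_on ?col V" by (rule matrix_col_inj[OF fin inj])
  have "?D \<subseteq> fun_vs.span (?col ` V)"
  proof (rule fun_vs.independent_card_le_imp_span)
    show "?col ` V \<subseteq> fun_vs.span ?D" using fun_vs_span_deltas[OF fin] by (auto simp: matrix_col_def)
    show "card ?D \<le> card (?col ` V)" using fin colinj by (simp add: card_image card_image_le)
  qed (use fin matrix_col_independent[OF fin inj] in auto)
  moreover have "y' \<in> fun_vs.span ?D" using fun_vs_span_deltas[OF fin, of y'] by (simp add: y'_def)
  ultimately have "y' \<in> fun_vs.span (?col ` V)"
    using fun_vs.span_minimal[OF _ fun_vs.subspace_span] by blast
  then obtain t r where tr: "finite t" "t \<subseteq> ?col ` V" "y' = (\<Sum>v\<in>t. (\<lambda>x. r v * v x))"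
    unfolding fun_vs.span_explicit by blast
  define x where "x b = (if ?col b \<in> t then r (?col b) else 0)" for b
  have "(\<Sum>b\<in>V. A a b * x b) = y a" if a: "a \<in> V" for a
  proof -
    have "(\<Sum>b\<in>V. A a b * x b) = (\<Sum>v\<in>t. r v * v a)"
      using sum_matrix_col_combination[OF fin colinj tr(2) a] unfolding x_def by simp
    also have "\<dots> = y' a" unfolding tr(3) by (simp add: sum_fun_apply)
    finally show ?thesis using a by (simp add: y'_def)
  qed
  then show ?thesis by blast
qed

end

text \<open>The Penrose equations in pinv are imposed only on V \<times> V, so uniqueness is proved
  for matrices restricted to V \<times> V.\<close>
definition restrict_mat :: "'v set \<Rightarrow> ('v \<Rightarrow> 'v \<Rightarrow> real) \<Rightarrow> 'v \<Rightarrow> 'v \<Rightarrow> real" where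
  "restrict_mat V Z = (\<lambda>a b. if a \<in> V \<and> b \<in> V then Z a b else 0)"

definition transp_mat :: "('v \<Rightarrow> 'v \<Rightarrow> real) \<Rightarrow> 'v \<Rightarrow> 'v \<Rightarrow> real" where
  "transp_mat Z = (\<lambda>a b. Z b a)"

lemma matmul_restrict: "matmul V (restrict_mat V X) (restrict_mat V Y) = restrict_mat V (matmul V X Y)"
  by (auto simp: fun_eq_iff restrict_mat_def matmul_def intro!: sum.cong)

lemma matmul_assoc: "finite V \<Longrightarrow> matmul V (matmul V X Y) Z = matmul V X (matmul V Y Z)"
  by (auto simp: fun_eq_iff matmul_def sum_distrib_left sum_distrib_right algebra_simps intro: sum.swap)

lemma transp_matmul: "transp_mat (matmul V X Y) = matmul V (transp_mat Y) (transp_mat X)"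
  by (auto simp: fun_eq_iff matmul_def transp_mat_def mult.commute)

lemma transp_restrict: "transp_mat (restrict_mat V X) = restrict_mat V (transp_mat X)"
  by (auto simp: fun_eq_iff restrict_mat_def transp_mat_def)

lemma restrict_restrict: "restrict_mat V (restrict_mat V X) = restrict_mat V X"
  by (auto simp: fun_eq_iff restrict_mat_def)

lemma restrict_mat_eq_iff: "restrict_mat V X = restrict_mat V Y \<longleftrightarrow> (\<forall>a\<in>V. \<forall>b\<in>V. X a b = Y a b)"
  by (auto simp: fun_eq_iff restrict_mat_def)

lemma penrose_unique:
  fixes A X Y :: "'v \<Rightarrow> 'v \<Rightarrow> real"
  assumes fin: "finite V" and sA: "transp_mat A = A"
    and X1: "matmul V (matmul V A X) A = A" and X2: "matmul V (matmul V X A) X = X"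
    and X3: "matmul V A X = transp_mat (matmul V A X)" and X4: "matmul V X A = transp_mat (matmul V X A)"
    and Y1: "matmul V (matmul V A Y) A = A" and Y2: "matmul V (matmul V Y A) Y = Y"
    and Y3: "matmul V A Y = transp_mat (matmul V A Y)" and Y4: "matmul V Y A = transp_mat (matmul V Y A)"
  shows "X = Y"
proof -
  \<comment> \<open>Both X and Y equal X A Y.\<close>
  note as = matmul_assoc[OF fin]
  let ?m = "matmul V"
  have F2: "?m A X = ?m (transp_mat X) A" using X3 sA by (simp add: transp_matmul)
  have F4: "?m A Y = ?m (transp_mat Y) A" using Y3 sA by (simp add: transp_matmul)
  have G2: "?m Y A = ?m A (transp_mat Y)" using Y4 sA by (simp add: transp_matmul)
  have G4: "?m X A = ?m A (transp_mat X)" using X4 sA by (simp add: transp_matmul)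
  have F3: "A = ?m A (?m (transp_mat Y) A)"
  proof -
    have "transp_mat A = transp_mat (?m (?m A Y) A)" using Y1 by simp
    then show ?thesis using sA by (simp add: transp_matmul as)
  qed
  have G3: "A = ?m (?m A (transp_mat X)) A"
  proof -
    have "transp_mat A = transp_mat (?m (?m A X) A)" using X1 by simp
    then show ?thesis using sA by (simp add: transp_matmul as)
  qed
  have "X = ?m X (?m A X)" using X2 by (simp add: as)
  also have "\<dots> = ?m X (?m (transp_mat X) A)" using F2 by simp
  also have "\<dots> = ?m X (?m (transp_mat X) (?m A (?m (transp_mat Y) A)))" using F3 by simp
  also have "\<dots> = ?m X (?m (?m (transp_mat X) A) (?m (transp_mat Y) A))" by (simp add: as)
  also have "\<dots> = ?m X (?m (?m A X) (?m A Y))" using F2 F4 by simp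
  also have "\<dots> = ?m (?m (?m X A) X) (?m A Y)" by (simp add: as)
  also have "\<dots> = ?m X (?m A Y)" using X2 by simp
  finally have XX: "X = ?m X (?m A Y)" .
  have "Y = ?m (?m Y A) Y" using Y2 by simp
  also have "\<dots> = ?m (?m A (transp_mat Y)) Y" using G2 by simp
  also have "\<dots> = ?m (?m (?m (?m A (transp_mat X)) A) (transp_mat Y)) Y" using G3 by simp
  also have "\<dots> = ?m (?m (?m A (transp_mat X)) (?m A (transp_mat Y))) Y" by (simp add: as)
  also have "\<dots> = ?m (?m (?m X A) (?m Y A)) Y" using G2 G4 by simp
  also have "\<dots> = ?m X (?m A (?m (?m Y A) Y))" by (simp add: as)
  also have "\<dots> = ?m X (?m A Y)" using Y2 by simp
  finally show ?thesis using XX by simp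
qed

lemma penrose_restrict:
  fixes L Z :: "'v \<Rightarrow> 'v \<Rightarrow> real"
  assumes Z: "restrict_mat V Z = Z"
    and H: "\<forall>a\<in>V. \<forall>b\<in>V. matmul V (matmul V L Z) L a b = L a b \<and> matmul V (matmul V Z L) Z a b = Z a b \<and>
        matmul V L Z a b = matmul V L Z b a \<and> matmul V Z L a b = matmul V Z L b a"
  shows "matmul V (matmul V (restrict_mat V L) Z) (restrict_mat V L) = restrict_mat V L"
    "matmul V (matmul V Z (restrict_mat V L)) Z = Z"
    "matmul V (restrict_mat V L) Z = transp_mat (matmul V (restrict_mat V L) Z)"
    "matmul V Z (restrict_mat V L) = transp_mat (matmul V Z (restrict_mat V L))"
proof -
  have m1: "matmul V (restrict_mat V L) Z = restrict_mat V (matmul V L Z)" using matmul_restrict[of V L Z] Z by simp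
  have m2: "matmul V Z (restrict_mat V L) = restrict_mat V (matmul V Z L)" using matmul_restrict[of V Z L] Z by simp
  show "matmul V (matmul V (restrict_mat V L) Z) (restrict_mat V L) = restrict_mat V L"
    unfolding m1 matmul_restrict restrict_mat_eq_iff using H by blast
  show "matmul V (matmul V Z (restrict_mat V L)) Z = Z"
    unfolding m2 using matmul_restrict[of V "matmul V Z L" Z] Z restrict_mat_eq_iff[of V "matmul V (matmul V Z L) Z" Z] H
    by (metis restrict_restrict)
  have "restrict_mat V (matmul V L Z) = restrict_mat V (transp_mat (matmul V L Z))" unfolding restrict_mat_eq_iff transp_mat_def using H by blast
  then show "matmul V (restrict_mat V L) Z = transp_mat (matmul V (restrict_mat V L) Z)" unfolding m1 transp_restrict .
  have "restrict_mat V (matmul V Z L) = restrict_mat V (transp_mat (matmul V Z L))" unfolding restrict_mat_eq_iff transp_mat_def using H by blast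
  then show "matmul V Z (restrict_mat V L) = transp_mat (matmul V Z (restrict_mat V L))" unfolding m2 transp_restrict .
qed

lemma sum_mult_centered_delta:
  fixes f :: "'a \<Rightarrow> real"
  assumes "finite V"
  shows "(\<Sum>c\<in>V. f c * ((if c = b then 1 else 0) - k)) = (if b \<in> V then f b else 0) - k * (\<Sum>c\<in>V. f c)"
proof -
  have "(\<Sum>c\<in>V. f c * ((if c = b then 1 else 0) - k)) = (\<Sum>c\<in>V. (if c = b then f c else 0) - k * f c)"
    by (intro sum.cong) (auto simp: algebra_simps)
  then show ?thesis using assms by (simp add: sum_subtractf sum_distrib_left sum.delta')
qed

lemma sum_centered_delta_mult:
  fixes f :: "'a \<Rightarrow> real"
  assumes "finite V"
  shows "(\<Sum>c\<in>V. ((if b = c then 1 else 0) - k) * f c) = (if b \<in> V then f b else 0) - k * (\<Sum>c\<in>V. f c)"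
proof -
  have "(\<Sum>c\<in>V. ((if b = c then 1 else 0) - k) * f c) = (\<Sum>c\<in>V. f c * ((if c = b then 1 else 0) - k))"
    by (intro sum.cong) (auto simp: algebra_simps)
  then show ?thesis using sum_mult_centered_delta[OF assms] by simp
qed

lemma power2_le_mult_imp_le:
  fixes x b :: real
  assumes "0 \<le> b" "x\<^sup>2 \<le> x * b"
  shows "x \<le> b"
proof (cases "x > 0")
  case True then show ?thesis using assms(2) by (simp add: power2_eq_square)
qed (use assms(1) in auto)

lemma one_minus_inverse_power_le:
  fixes t y :: real
  assumes "1 \<le> t" "0 < y" "t * ln y \<le> real K"
  shows "(1 - 1 / t) ^ K \<le> 1 / y"
proof -
  have "(1 - 1 / t) ^ K \<le> exp (- (1 / t)) ^ K"
    using assms(1) exp_ge_add_one_self[of "- (1 / t)"] by (intro power_mono) auto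
  also have "\<dots> = exp (- (real K / t))" by (simp add: exp_of_nat_mult[symmetric])
  also have "\<dots> \<le> exp (- ln y)"
    using assms(1,3) by (simp add: field_simps)
  also have "\<dots> = 1 / y" using assms(2) by (simp add: exp_minus')
  finally show ?thesis .
qed

lemma weighted_Cauchy_Schwarz:
  fixes r a b :: "'a \<Rightarrow> real"
  assumes "\<forall>i\<in>I. 0 \<le> r i"
  shows "(\<Sum>i\<in>I. r i * a i * b i)\<^sup>2 \<le> (\<Sum>i\<in>I. r i * (a i)\<^sup>2) * (\<Sum>i\<in>I. r i * (b i)\<^sup>2)"
proof -
  have e1: "(\<Sum>i\<in>I. r i * a i * b i) = (\<Sum>i\<in>I. (sqrt (r i) * a i) * (sqrt (r i) * b i))"
  proof (intro sum.cong refl)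
    fix i assume "i \<in> I"
    then have "sqrt (r i) * sqrt (r i) = r i" using assms by simp
    then show "r i * a i * b i = (sqrt (r i) * a i) * (sqrt (r i) * b i)" by (metis mult.assoc mult.left_commute)
  qed
  have e2: "(\<Sum>i\<in>I. r i * (c i)\<^sup>2) = (\<Sum>i\<in>I. (sqrt (r i) * c i)\<^sup>2)" for c :: "'a \<Rightarrow> real"
    using assms by (intro sum.cong refl) (simp add: power_mult_distrib)
  show ?thesis unfolding e1 e2 by (rule Cauchy_Schwarz_ineq_sum)
qed

section \<open>Electrical flows on a network with a spanning tree\<close>

lemma inc_of_edge: "src e \<noteq> dst e \<Longrightarrow> inc src dst e c = (if c = src e then 1 else 0) - (if c = dst e then 1 else 0)"
  by (auto simp: inc_def)

locale tree_network =
  fixes V :: "'v set" and E :: "'e set" and src dst :: "'e \<Rightarrow> 'v" and w :: "'e \<Rightarrow> real"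
    and T :: "'e set" and s :: 'v and chi :: "'v \<Rightarrow> real"
  assumes graph: "graph V E src dst" and connected: "connected_on src dst V E" and w_pos: "\<forall>e\<in>E. w e > 0"
    and spanning: "spanning_tree V E src dst T" and s_in_V: "s \<in> V" and chi_sum_zero: "(\<Sum>a\<in>V. chi a) = 0"
    and off_tree_nonempty: "E - T \<noteq> {}"
begin

lemma finite_V: "finite V" using graph unfolding graph_def by auto
lemma finite_E: "finite E" using graph unfolding graph_def by auto
lemma edge_ends: "e \<in> E \<Longrightarrow> src e \<in> V \<and> dst e \<in> V \<and> src e \<noteq> dst e" using graph unfolding graph_def by auto
lemma T_subset_E: "T \<subseteq> E" using spanning unfolding spanning_tree_def by auto
lemma finite_T: "finite T" using T_subset_E finite_E finite_subset by auto
lemma is_tree_T: "is_tree V T src dst"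
  unfolding is_tree_def using finite_V finite_T s_in_V edge_ends T_subset_E spanning unfolding spanning_tree_def by auto

lemma res_pos: "e \<in> E \<Longrightarrow> res w e > 0" using w_pos by (simp add: res_def)
lemma w_mult_res:
  assumes "e \<in> E" shows "w e * res w e = 1"
proof -
  have "w e \<noteq> 0" using w_pos assms by force
  then show ?thesis by (simp add: res_def)
qed
lemma one_div_res: "1 / res w e = w e" by (simp add: res_def)

lemma tree_path_props: "a \<in> V \<Longrightarrow> b \<in> V \<Longrightarrow>
   tree_path src dst T a b \<noteq> [] \<and> hd (tree_path src dst T a b) = a \<and> last (tree_path src dst T a b) = b
   \<and> distinct (tree_path src dst T a b) \<and> walk src dst T (tree_path src dst T a b)"
  unfolding tree_path_def by (rule theI'[OF tree_path_ex1[OF is_tree_T]])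

lemma incidence_sum_tree_supported:
  assumes "\<forall>e. e \<notin> T \<longrightarrow> f e = 0"
  shows "(\<Sum>e\<in>E. inc src dst e c * f e) = (\<Sum>e\<in>T. inc src dst e c * f e)"
  by (rule sum.mono_neutral_right[OF finite_E T_subset_E]) (use assms in auto)

lemma tree_supported_flow_unique:
  assumes "\<forall>e. e \<notin> T \<longrightarrow> f e = 0" "\<forall>e. e \<notin> T \<longrightarrow> g e = 0"
    "\<forall>c\<in>V. (\<Sum>e\<in>E. inc src dst e c * f e) = (\<Sum>e\<in>E. inc src dst e c * g e)"
  shows "f = g"
proof
  fix e
  show "f e = g e"
  proof (cases "e \<in> T")
    case False then show ?thesis using assms by simp
  next
    case True
    have "\<forall>c\<in>V. (\<Sum>e\<in>T. inc src dst e c * (f e - g e)) = 0"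
    proof
      fix c assume c: "c \<in> V"
      have "(\<Sum>e\<in>T. inc src dst e c * (f e - g e)) = (\<Sum>e\<in>T. inc src dst e c * f e) - (\<Sum>e\<in>T. inc src dst e c * g e)"
        by (simp add: algebra_simps sum_subtractf)
      also have "\<dots> = 0" using assms(3) c incidence_sum_tree_supported[OF assms(1)] incidence_sum_tree_supported[OF assms(2)] by simp
      finally show "(\<Sum>e\<in>T. inc src dst e c * (f e - g e)) = 0" .
    qed
    then have "f e - g e = 0" using tree_circulation_zero[OF is_tree_T, of "\<lambda>e. f e - g e"] True by blast
    then show ?thesis by simp
  qed
qed

lemma tree_no_parallel_edges:
  assumes "e1 \<in> T" "e2 \<in> T" "(src e1 = src e2 \<and> dst e1 = dst e2) \<or> (src e1 = dst e2 \<and> dst e1 = src e2)"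
  shows "e1 = e2"
proof (rule ccontr)
  assume ne: "e1 \<noteq> e2"
  have s1: "src e1 \<noteq> dst e1" "src e2 \<noteq> dst e2" using edge_ends assms(1,2) T_subset_E by auto
  define \<sigma> where "\<sigma> = (if src e1 = src e2 then -1 else (1::real))"
  define g where "g e = (if e = e1 then 1 else if e = e2 then \<sigma> else 0)" for e
  have "\<forall>c\<in>V. (\<Sum>e\<in>T. inc src dst e c * g e) = 0"
  proof
    fix c assume "c \<in> V"
    have "(\<Sum>e\<in>T. inc src dst e c * g e) = (\<Sum>e\<in>T. (if e = e1 then inc src dst e1 c else 0) + (if e = e2 then \<sigma> * inc src dst e2 c else 0))"
      unfolding g_def using ne by (intro sum.cong) auto
    also have "\<dots> = inc src dst e1 c + \<sigma> * inc src dst e2 c"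
      using finite_T assms(1,2) by (simp add: sum.distrib sum.delta)
    also have "\<dots> = 0" using assms(3) s1 unfolding \<sigma>_def by (auto simp: inc_def)
    finally show "(\<Sum>e\<in>T. inc src dst e c * g e) = 0" .
  qed
  then have "g e1 = 0" using tree_circulation_zero[OF is_tree_T] assms(1) by blast
  then show False unfolding g_def by simp
qed

lemma tree_flow_outside: "e \<notin> T \<Longrightarrow> tree_flow src dst T a b e = 0"
  by (simp add: tree_flow_def)

lemma tree_edge_flow_divergence:
  assumes "adj src dst T x y" "x \<noteq> y"
  shows "(\<Sum>e\<in>T. inc src dst e c * (if src e = x \<and> dst e = y then 1
            else if src e = y \<and> dst e = x then -1 else 0))
       = (if c = x then 1 else 0) - (if c = y then 1 else 0)"
proof -
  define st where "st e = (if src e = x \<and> dst e = y then 1 else if src e = y \<and> dst e = x then -1 else (0::real))" for e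
  obtain e0 where e0: "e0 \<in> T" "(src e0 = x \<and> dst e0 = y) \<or> (src e0 = y \<and> dst e0 = x)"
    using assms(1) unfolding adj_def by blast
  have "st e = 0" if "e \<in> T - {e0}" for e
  proof (rule ccontr)
    assume "st e \<noteq> 0"
    then have "(src e = x \<and> dst e = y) \<or> (src e = y \<and> dst e = x)"
      unfolding st_def by (auto split: if_splits)
    then show False using tree_no_parallel_edges[of e e0] that e0 by auto
  qed
  then have "(\<Sum>e\<in>T. inc src dst e c * st e) = inc src dst e0 c * st e0"
    using finite_T e0(1) by (simp add: sum.remove)
  also have "\<dots> = (if c = x then 1 else 0) - (if c = y then 1 else 0)"
    using e0(2) assms(2) unfolding st_def inc_def by auto
  finally show ?thesis unfolding st_def .
qed

lemma tree_flow_divergence: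
  assumes a: "a \<in> V" and b: "b \<in> V"
  shows "(\<Sum>e\<in>E. inc src dst e c * tree_flow src dst T a b e) = (if c = a then 1 else 0) - (if c = b then 1 else 0)"
proof -
  define p where "p = tree_path src dst T a b"
  define n where "n = length p"
  have P: "p \<noteq> []" "hd p = a" "last p = b" "distinct p" "walk src dst T p"
    using tree_path_props[OF a b] unfolding p_def by auto
  define st where "st i e = (if src e = p ! i \<and> dst e = p ! Suc i then 1
      else if src e = p ! Suc i \<and> dst e = p ! i then -1 else (0::real))" for i e
  have tf: "tree_flow src dst T a b e = (if e \<in> T then \<Sum>i<n-1. st i e else 0)" for e
    unfolding tree_flow_def Let_def p_def[symmetric] n_def st_def by simp
  define gg where "gg i = (if c = p ! i then 1 else (0::real))" for i
  have step: "(\<Sum>e\<in>T. inc src dst e c * st i e) = gg i - gg (Suc i)" if i: "i < n - 1" for i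
  proof -
    have si: "Suc i < length p" using i n_def by simp
    then have "adj src dst T (p ! i) (p ! Suc i)" "p ! i \<noteq> p ! Suc i"
      using P(4,5) unfolding walk_def by (auto simp: nth_eq_iff_index_eq)
    then show ?thesis unfolding st_def gg_def by (rule tree_edge_flow_divergence)
  qed
  have "(\<Sum>e\<in>E. inc src dst e c * tree_flow src dst T a b e) = (\<Sum>e\<in>T. inc src dst e c * (\<Sum>i<n-1. st i e))"
    unfolding tf using T_subset_E
    by (simp add: if_distrib sum.inter_restrict[OF finite_E, symmetric] Int_absorb1 cong: if_cong)
  also have "\<dots> = (\<Sum>i<n-1. \<Sum>e\<in>T. inc src dst e c * st i e)"
    by (simp add: sum_distrib_left sum.swap[of _ T])
  also have "\<dots> = (\<Sum>i<n-1. gg i - gg (Suc i))" by (intro sum.cong) (auto simp: step)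
  also have "\<dots> = gg 0 - gg (n - 1)" by (rule sum_lessThan_telescope')
  also have "gg 0 = (if c = a then 1 else 0)" using P unfolding gg_def by (simp add: hd_conv_nth)
  also have "gg (n - 1) = (if c = b then 1 else 0)" using P unfolding gg_def n_def by (simp add: last_conv_nth)
  finally show ?thesis .
qed

lemma tree_flow_support:
  assumes "tree_flow src dst T a b e \<noteq> 0"
  shows "e \<in> path_edges src dst T a b"
proof -
  define p where "p = tree_path src dst T a b"
  have eT: "e \<in> T" using assms tree_flow_outside by blast
  define st where "st i = (if src e = p ! i \<and> dst e = p ! Suc i then 1
      else if src e = p ! Suc i \<and> dst e = p ! i then -1 else (0::real))" for i
  have ne: "(\<Sum>i<length p - 1. st i) \<noteq> 0"
    using assms eT unfolding tree_flow_def Let_def p_def st_def by simp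
  have "\<exists>i\<in>{..<length p - 1}. st i \<noteq> 0"
  proof (rule ccontr)
    assume "\<not> (\<exists>i\<in>{..<length p - 1}. st i \<noteq> 0)"
    then have "(\<Sum>i<length p - 1. st i) = 0" by (intro sum.neutral) blast
    then show False using ne by simp
  qed
  then obtain i where i: "i < length p - 1" "st i \<noteq> 0" by blast
  have "(src e = p ! i \<and> dst e = p ! Suc i) \<or> (src e = p ! Suc i \<and> dst e = p ! i)"
    using i(2) unfolding st_def by (auto split: if_splits)
  moreover have "Suc i < length p" using i(1) by simp
  ultimately show ?thesis unfolding path_edges_def Let_def p_def[symmetric] using eT by blast
qed

lemma abs_tree_flow_le_1:
  assumes a: "a \<in> V" and b: "b \<in> V"
  shows "\<bar>tree_flow src dst T a b e\<bar> \<le> 1"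
proof (cases "e \<in> T")
  case False then show ?thesis by (simp add: tree_flow_outside)
next
  case True
  define p where "p = tree_path src dst T a b"
  have P: "distinct p" using tree_path_props[OF a b] unfolding p_def by auto
  define st where "st i = (if src e = p ! i \<and> dst e = p ! Suc i then 1
      else if src e = p ! Suc i \<and> dst e = p ! i then -1 else (0::real))" for i
  have tf: "tree_flow src dst T a b e = (\<Sum>i<length p - 1. st i)"
    unfolding tree_flow_def Let_def p_def[symmetric] st_def using True by simp
  define I where "I = {i\<in>{..<length p - 1}. st i \<noteq> 0}"
  have "(\<Sum>i<length p - 1. st i) = (\<Sum>i\<in>I. st i)"
    unfolding I_def by (rule sum.mono_neutral_right) auto
  also have "\<bar>\<dots>\<bar> \<le> (\<Sum>i\<in>I. \<bar>st i\<bar>)" by (rule sum_abs)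
  also have "\<dots> \<le> (\<Sum>i\<in>I. 1)" by (intro sum_mono) (auto simp: st_def)
  also have "\<dots> = card I" by simp
  also have "card I \<le> 1"
  proof -
    have "\<forall>i\<in>I. \<forall>j\<in>I. i = j"
    proof (intro ballI)
      fix i j assume i: "i \<in> I" and j: "j \<in> I"
      have il: "Suc i < length p" "Suc j < length p" using i j unfolding I_def by auto
      have "{p ! i, p ! Suc i} = {src e, dst e}" "{p ! j, p ! Suc j} = {src e, dst e}"
        using i j unfolding I_def st_def by (auto split: if_splits)
      then show "i = j" using distinct_adjacent_pair_unique[OF P il] by simp
    qed
    moreover have "finite I" unfolding I_def by simp
    ultimately show ?thesis using card_le_Suc0_iff_eq by fastforce
  qed
  finally show ?thesis using tf by simp
qed

lemma tree_flow_sq_le: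
  assumes "a \<in> V" "b \<in> V"
  shows "(tree_flow src dst T a b e)\<^sup>2 \<le> (if e \<in> path_edges src dst T a b then 1 else 0)"
proof (cases "tree_flow src dst T a b e = 0")
  case True then show ?thesis by simp
next
  case False
  have "(tree_flow src dst T a b e)\<^sup>2 \<le> 1"
    using abs_tree_flow_le_1[OF assms, of e] by (simp add: abs_square_le_1)
  then show ?thesis using tree_flow_support[OF False] by simp
qed

lemma path_edges_subset: "path_edges src dst T a b \<subseteq> T"
  unfolding path_edges_def Let_def by auto

lemma tree_flow_via_root:
  assumes "a \<in> V" "b \<in> V"
  shows "(\<lambda>e. tree_flow src dst T a s e - tree_flow src dst T b s e) = tree_flow src dst T a b"
proof (rule tree_supported_flow_unique)
  show "\<forall>e. e \<notin> T \<longrightarrow> tree_flow src dst T a s e - tree_flow src dst T b s e = 0" by (simp add: tree_flow_outside)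
  show "\<forall>e. e \<notin> T \<longrightarrow> tree_flow src dst T a b e = 0" by (simp add: tree_flow_outside)
  show "\<forall>c\<in>V. (\<Sum>e\<in>E. inc src dst e c * (tree_flow src dst T a s e - tree_flow src dst T b s e)) =
       (\<Sum>e\<in>E. inc src dst e c * tree_flow src dst T a b e)"
  proof
    fix c assume "c \<in> V"
    have "(\<Sum>e\<in>E. inc src dst e c * (tree_flow src dst T a s e - tree_flow src dst T b s e))
      = (\<Sum>e\<in>E. inc src dst e c * tree_flow src dst T a s e) - (\<Sum>e\<in>E. inc src dst e c * tree_flow src dst T b s e)"
      by (simp add: right_diff_distrib sum_subtractf)
    then show "(\<Sum>e\<in>E. inc src dst e c * (tree_flow src dst T a s e - tree_flow src dst T b s e)) =
       (\<Sum>e\<in>E. inc src dst e c * tree_flow src dst T a b e)"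
      using tree_flow_divergence[OF assms(1) s_in_V, of c] tree_flow_divergence[OF assms(2) s_in_V, of c] tree_flow_divergence[OF assms, of c] by simp
  qed
qed

lemma tree_flow_edge:
  assumes e0: "e0 \<in> T"
  shows "tree_flow src dst T (src e0) (dst e0) = (\<lambda>e. if e = e0 then 1 else 0)"
proof -
  have E0: "e0 \<in> E" using e0 T_subset_E by auto
  have en: "src e0 \<in> V" "dst e0 \<in> V" "src e0 \<noteq> dst e0" using edge_ends[OF E0] by auto
  show ?thesis
  proof (rule tree_supported_flow_unique)
    show "\<forall>e. e \<notin> T \<longrightarrow> tree_flow src dst T (src e0) (dst e0) e = 0" by (simp add: tree_flow_outside)
    show "\<forall>e. e \<notin> T \<longrightarrow> (if e = e0 then 1 else 0) = (0::real)" using e0 by auto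
    show "\<forall>c\<in>V. (\<Sum>e\<in>E. inc src dst e c * tree_flow src dst T (src e0) (dst e0) e) =
       (\<Sum>e\<in>E. inc src dst e c * (if e = e0 then 1 else 0))"
    proof
      fix c assume "c \<in> V"
      have "(\<Sum>e\<in>E. inc src dst e c * (if e = e0 then 1 else 0)) = (\<Sum>e\<in>E. if e = e0 then inc src dst e c else 0)"
        by (intro sum.cong) auto
      also have "\<dots> = inc src dst e0 c" using finite_E E0 by (simp add: sum.delta')
      finally show "(\<Sum>e\<in>E. inc src dst e c * tree_flow src dst T (src e0) (dst e0) e) =
         (\<Sum>e\<in>E. inc src dst e c * (if e = e0 then 1 else 0))"
        using tree_flow_divergence[OF en(1,2)] en(3) by (simp add: inc_of_edge)
    qed
  qed
qed

lemma root_flow_feasible: "feasible V E src dst chi (\<lambda>e. \<Sum>a\<in>V. chi a * tree_flow src dst T a s e)"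
  unfolding feasible_def
proof
  fix c assume c: "c \<in> V"
  have "(\<Sum>e\<in>E. inc src dst e c * (\<Sum>a\<in>V. chi a * tree_flow src dst T a s e))
      = (\<Sum>a\<in>V. chi a * (\<Sum>e\<in>E. inc src dst e c * tree_flow src dst T a s e))"
    by (simp add: sum_distrib_left sum.swap[of _ E] algebra_simps)
  also have "\<dots> = (\<Sum>a\<in>V. (if a = c then chi a else 0) - (if c = s then 1 else 0) * chi a)"
    using tree_flow_divergence s_in_V by (intro sum.cong) auto
  also have "\<dots> = chi c"
    using chi_sum_zero c finite_V by (simp add: sum_subtractf sum_distrib_left[symmetric] sum.delta')
  finally show "(\<Sum>e\<in>E. inc src dst e c * (\<Sum>a\<in>V. chi a * tree_flow src dst T a s e)) = chi c" .
qed

lemma tree_flow0_eq: "tree_flow0 V E src dst T chi = (\<lambda>e. \<Sum>a\<in>V. chi a * tree_flow src dst T a s e)"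
  unfolding tree_flow0_def
proof (rule the_equality)
  show "(\<forall>e. e \<notin> T \<longrightarrow> (\<Sum>a\<in>V. chi a * tree_flow src dst T a s e) = 0) \<and>
      feasible V E src dst chi (\<lambda>e. \<Sum>a\<in>V. chi a * tree_flow src dst T a s e)"
    using root_flow_feasible by (simp add: tree_flow_outside)
  fix f assume "(\<forall>e. e \<notin> T \<longrightarrow> f e = 0) \<and> feasible V E src dst chi f"
  then show "f = (\<lambda>e. \<Sum>a\<in>V. chi a * tree_flow src dst T a s e)"
    using root_flow_feasible
    by (intro tree_supported_flow_unique) (auto simp: feasible_def tree_flow_outside)
qed

lemma cycle_vec_circulation:
  assumes e: "e \<in> E - T"
  shows "(\<Sum>e'\<in>E. inc src dst e' c * cycle_vec src dst T e e') = 0"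
proof -
  have en: "src e \<in> V" "dst e \<in> V" "src e \<noteq> dst e" using edge_ends e by auto
  have "(\<Sum>e'\<in>E. inc src dst e' c * cycle_vec src dst T e e')
     = (\<Sum>e'\<in>E. if e' = e then inc src dst e' c else 0) - (\<Sum>e'\<in>E. inc src dst e' c * tree_flow src dst T (src e) (dst e) e')"
  proof -
    have "(\<Sum>e'\<in>E. inc src dst e' c * cycle_vec src dst T e e')
      = (\<Sum>e'\<in>E. (if e' = e then inc src dst e' c else 0) - inc src dst e' c * tree_flow src dst T (src e) (dst e) e')"
      unfolding cycle_vec_def by (intro sum.cong) (auto simp: right_diff_distrib)
    then show ?thesis by (simp add: sum_subtractf)
  qed
  also have "\<dots> = 0" using tree_flow_divergence[OF en(1,2)] e finite_E en(3) by (simp add: sum.delta' inc_of_edge)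
  finally show ?thesis .
qed

lemma cycle_vec_self: "e \<in> E - T \<Longrightarrow> cycle_vec src dst T e e = 1"
  by (simp add: cycle_vec_def tree_flow_outside)

lemma cycle_vec_off_tree: "e \<in> E - T \<Longrightarrow> e' \<notin> T \<Longrightarrow> e' \<noteq> e \<Longrightarrow> cycle_vec src dst T e e' = 0"
  by (simp add: cycle_vec_def tree_flow_outside)

lemma circulation_cycle_decomposition:
  assumes z: "\<forall>e. e \<notin> E \<longrightarrow> g e = 0" and c: "\<forall>c\<in>V. (\<Sum>e\<in>E. inc src dst e c * g e) = 0"
  shows "g = (\<lambda>e'. \<Sum>e\<in>E - T. g e * cycle_vec src dst T e e')"
proof -
  define h where "h e' = g e' - (\<Sum>e\<in>E - T. g e * cycle_vec src dst T e e')" for e'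
  have "h = (\<lambda>_. 0)"
  proof (rule tree_supported_flow_unique)
    show "\<forall>e'. e' \<notin> T \<longrightarrow> h e' = 0"
    proof (intro allI impI)
      fix e' assume e': "e' \<notin> T"
      show "h e' = 0"
      proof (cases "e' \<in> E")
        case False
        then have "\<forall>e\<in>E - T. cycle_vec src dst T e e' = 0" using cycle_vec_off_tree e' by auto
        then show ?thesis using z False unfolding h_def by simp
      next
        case True
        have "(\<Sum>e\<in>E - T. g e * cycle_vec src dst T e e') = (\<Sum>e\<in>E - T. if e = e' then g e else 0)"
          using cycle_vec_self cycle_vec_off_tree e' by (intro sum.cong) auto
        also have "\<dots> = g e'" using True e' finite_E by (simp add: sum.delta')
        finally show ?thesis unfolding h_def by simp
      qed
    qed
    show "\<forall>e. e \<notin> T \<longrightarrow> (0::real) = 0" by simp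
    show "\<forall>c\<in>V. (\<Sum>e\<in>E. inc src dst e c * h e) = (\<Sum>e\<in>E. inc src dst e c * 0)"
    proof
      fix c0 assume c0: "c0 \<in> V"
      have "(\<Sum>e\<in>E. inc src dst e c0 * h e) = (\<Sum>e\<in>E. inc src dst e c0 * g e)
          - (\<Sum>e\<in>E - T. g e * (\<Sum>e'\<in>E. inc src dst e' c0 * cycle_vec src dst T e e'))"
        unfolding h_def by (simp add: algebra_simps sum_subtractf sum_distrib_left sum.swap[of _ E])
      also have "\<dots> = 0" using c c0 cycle_vec_circulation by simp
      finally show "(\<Sum>e\<in>E. inc src dst e c0 * h e) = (\<Sum>e\<in>E. inc src dst e c0 * 0)" by simp
    qed
  qed
  show ?thesis
  proof
    fix e'
    have "h e' = 0" using \<open>h = (\<lambda>_. 0)\<close> by simp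
    then show "g e' = (\<Sum>e\<in>E - T. g e * cycle_vec src dst T e e')" unfolding h_def by simp
  qed
qed

lemma incidence_apply:
  assumes "e \<in> E"
  shows "(\<Sum>b\<in>V. inc src dst e b * y b) = y (src e) - y (dst e)"
proof -
  have en: "src e \<in> V" "dst e \<in> V" "src e \<noteq> dst e" using edge_ends assms by auto
  have "(\<Sum>b\<in>V. inc src dst e b * y b) = (\<Sum>b\<in>V. (if b = src e then y b else 0) - (if b = dst e then y b else 0))"
    using en(3) by (intro sum.cong) (auto simp: inc_def)
  also have "\<dots> = y (src e) - y (dst e)" using finite_V en by (simp add: sum_subtractf sum.delta')
  finally show ?thesis .
qed

lemma laplacian_apply:
  "(\<Sum>b\<in>V. laplacian E src dst w a b * y b) = (\<Sum>e\<in>E. inc src dst e a * w e * (y (src e) - y (dst e)))"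
proof -
  have "(\<Sum>b\<in>V. laplacian E src dst w a b * y b)
      = (\<Sum>e\<in>E. inc src dst e a * w e * (\<Sum>b\<in>V. inc src dst e b * y b))"
    unfolding laplacian_def one_div_res
    by (simp add: sum_distrib_left sum_distrib_right sum.swap[of _ V] algebra_simps)
  also have "\<dots> = (\<Sum>e\<in>E. inc src dst e a * w e * (y (src e) - y (dst e)))"
    by (intro sum.cong) (auto simp: incidence_apply)
  finally show ?thesis .
qed

lemma incidence_adjoint:
  "(\<Sum>e\<in>E. f e * (y (src e) - y (dst e))) = (\<Sum>c\<in>V. y c * (\<Sum>e\<in>E. inc src dst e c * f e))"
proof -
  have "(\<Sum>c\<in>V. y c * (\<Sum>e\<in>E. inc src dst e c * f e)) = (\<Sum>e\<in>E. f e * (\<Sum>c\<in>V. inc src dst e c * y c))"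
    by (simp add: sum_distrib_left sum.swap[of _ V] algebra_simps)
  also have "\<dots> = (\<Sum>e\<in>E. f e * (y (src e) - y (dst e)))"
    by (intro sum.cong) (auto simp: incidence_apply)
  finally show ?thesis by simp
qed

lemma laplacian_quadratic_form:
  "(\<Sum>a\<in>V. \<Sum>b\<in>V. y a * laplacian E src dst w a b * y b) = (\<Sum>e\<in>E. w e * (y (src e) - y (dst e))\<^sup>2)"
proof -
  have "(\<Sum>a\<in>V. \<Sum>b\<in>V. y a * laplacian E src dst w a b * y b) = (\<Sum>a\<in>V. y a * (\<Sum>b\<in>V. laplacian E src dst w a b * y b))"
    by (simp add: sum_distrib_left mult.assoc)
  also have "\<dots> = (\<Sum>a\<in>V. y a * (\<Sum>e\<in>E. inc src dst e a * (w e * (y (src e) - y (dst e)))))"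
    unfolding laplacian_apply by (simp add: mult.assoc)
  also have "\<dots> = (\<Sum>e\<in>E. (w e * (y (src e) - y (dst e))) * (y (src e) - y (dst e)))"
    using incidence_adjoint[of "\<lambda>e. w e * (y (src e) - y (dst e))" y] by simp
  finally show ?thesis by (simp add: power2_eq_square mult.assoc)
qed

lemma laplacian_sym: "laplacian E src dst w a b = laplacian E src dst w b a"
  unfolding laplacian_def by (simp add: mult.commute mult.left_commute)

lemma laplacian_col_sum: "(\<Sum>a\<in>V. laplacian E src dst w a b) = 0"
proof -
  have "(\<Sum>a\<in>V. laplacian E src dst w a b) = (\<Sum>a\<in>V. laplacian E src dst w b a * 1)"
    using laplacian_sym by simp
  also have "\<dots> = 0" unfolding laplacian_apply by simp
  finally show ?thesis .
qed

lemma sum_laplacian_plus_one: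
  "(\<Sum>a\<in>V. \<Sum>b\<in>V. (laplacian E src dst w a b + 1) * x b) = of_nat (card V) * (\<Sum>b\<in>V. x b)"
proof -
  let ?L = "laplacian E src dst w"
  have 1: "(\<Sum>a\<in>V. \<Sum>b\<in>V. (?L a b + 1) * x b) = (\<Sum>a\<in>V. \<Sum>b\<in>V. ?L a b * x b) + of_nat (card V) * (\<Sum>b\<in>V. x b)"
    by (simp add: distrib_right sum.distrib)
  have 2: "(\<Sum>a\<in>V. \<Sum>b\<in>V. ?L a b * x b) = (\<Sum>b\<in>V. (\<Sum>a\<in>V. ?L a b) * x b)"
    by (subst sum.swap) (simp add: sum_distrib_right)
  show ?thesis using 1 2 by (simp add: laplacian_col_sum)
qed

text \<open>L + J (J the all-ones matrix) is nonsingular: the columns of L sum to zero, so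
  (L + J) x = 0 forces \<Sum> x = 0 and L x = 0; then x^T L x = 0 makes x constant on the
  connected graph, hence zero.\<close>
lemma laplacian_plus_one_inj:
  "\<forall>x. (\<forall>a\<in>V. (\<Sum>b\<in>V. (laplacian E src dst w a b + 1) * x b) = 0) \<longrightarrow> (\<forall>a\<in>V. x a = 0)"
proof (intro allI impI)
  fix x :: "'v \<Rightarrow> real"
  assume h: "\<forall>a\<in>V. (\<Sum>b\<in>V. (laplacian E src dst w a b + 1) * x b) = 0"
  let ?L = "laplacian E src dst w"
  have "(\<Sum>a\<in>V. \<Sum>b\<in>V. (?L a b + 1) * x b) = of_nat (card V) * (\<Sum>b\<in>V. x b)"
    by (rule sum_laplacian_plus_one)
  then have "of_nat (card V) * (\<Sum>b\<in>V. x b) = 0" using h by simp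
  moreover have "card V > 0" using finite_V s_in_V card_gt_0_iff by blast
  ultimately have sx: "(\<Sum>b\<in>V. x b) = 0" by simp
  have lx: "\<forall>a\<in>V. (\<Sum>b\<in>V. ?L a b * x b) = 0"
  proof
    fix a assume "a \<in> V"
    then have "(\<Sum>b\<in>V. (?L a b + 1) * x b) = 0" using h by blast
    then show "(\<Sum>b\<in>V. ?L a b * x b) = 0" using sx by (simp add: algebra_simps sum.distrib)
  qed
  have z: "(\<Sum>e\<in>E. w e * (x (src e) - x (dst e))\<^sup>2) = 0"
    unfolding laplacian_quadratic_form[symmetric] using lx by (simp add: mult.assoc sum_distrib_left[symmetric])
  have nn: "\<And>e. e \<in> E \<Longrightarrow> 0 \<le> w e * (x (src e) - x (dst e))\<^sup>2"
    using w_pos by (simp add: less_imp_le)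
  have "\<forall>e\<in>E. w e * (x (src e) - x (dst e))\<^sup>2 = 0"
    using iffD1[OF sum_nonneg_eq_0_iff[OF finite_E nn] z] .
  then have eq: "\<forall>e\<in>E. x (src e) = x (dst e)"
  proof (intro ballI)
    fix e assume a: "\<forall>e\<in>E. w e * (x (src e) - x (dst e))\<^sup>2 = 0" "e \<in> E"
    then have "w e * (x (src e) - x (dst e))\<^sup>2 = 0" by blast
    moreover have "w e > 0" using w_pos \<open>e \<in> E\<close> by blast
    ultimately show "x (src e) = x (dst e)" by simp
  qed
  have const: "x a = x s" if aV: "a \<in> V" for a
  proof -
    obtain zs where "zs \<noteq> []" "hd zs = a" "last zs = s" "walk src dst E zs"
      using connected[unfolded connected_on_def, rule_format, OF aV s_in_V] by blast
    then show ?thesis using walk_const_potential[of src dst E zs x] eq by simp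
  qed
  have "(\<Sum>b\<in>V. x b) = of_nat (card V) * x s" using const by simp
  then have "x s = 0" using sx \<open>card V > 0\<close> by simp
  then show "\<forall>a\<in>V. x a = 0" using const by simp
qed

lemma laplacian_solvable:
  assumes "(\<Sum>a\<in>V. y a) = 0"
  shows "\<exists>x. (\<forall>a\<in>V. (\<Sum>b\<in>V. laplacian E src dst w a b * x b) = y a) \<and> (\<Sum>a\<in>V. x a) = 0"
proof -
  let ?L = "laplacian E src dst w"
  obtain x where x: "\<forall>a\<in>V. (\<Sum>b\<in>V. (?L a b + 1) * x b) = y a"
    using square_matrix_inj_imp_surj[OF finite_V laplacian_plus_one_inj] by blast
  have "(\<Sum>a\<in>V. \<Sum>b\<in>V. (?L a b + 1) * x b) = of_nat (card V) * (\<Sum>b\<in>V. x b)"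
    by (rule sum_laplacian_plus_one)
  then have "of_nat (card V) * (\<Sum>b\<in>V. x b) = 0" using x assms by simp
  moreover have "card V > 0" using finite_V s_in_V card_gt_0_iff by blast
  ultimately have sx: "(\<Sum>b\<in>V. x b) = 0" by simp
  have "\<forall>a\<in>V. (\<Sum>b\<in>V. ?L a b * x b) = y a"
  proof
    fix a assume "a \<in> V"
    then have "(\<Sum>b\<in>V. (?L a b + 1) * x b) = y a" using x by blast
    then show "(\<Sum>b\<in>V. ?L a b * x b) = y a" using sx by (simp add: algebra_simps sum.distrib)
  qed
  then show ?thesis using sx by blast
qed

lemma laplacian_centered_solution_sym:
  assumes ab: "a \<in> V" "b \<in> V"
    and x: "\<forall>c\<in>V. (\<Sum>d\<in>V. laplacian E src dst w c d * x d) = (if c = a then 1 else 0) - k"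
      "(\<Sum>c\<in>V. x c) = 0"
    and y: "\<forall>c\<in>V. (\<Sum>d\<in>V. laplacian E src dst w c d * y d) = (if c = b then 1 else 0) - k"
      "(\<Sum>c\<in>V. y c) = 0"
  shows "y a = x b"
proof -
  let ?L = "laplacian E src dst w"
  define Q where "Q = (\<Sum>c\<in>V. \<Sum>d\<in>V. x c * ?L c d * y d)"
  have "Q = (\<Sum>c\<in>V. x c * (\<Sum>d\<in>V. ?L c d * y d))"
    unfolding Q_def by (simp add: sum_distrib_left mult.assoc)
  also have "\<dots> = (\<Sum>c\<in>V. x c * ((if c = b then 1 else 0) - k))"
    using y(1) by (intro sum.cong) auto
  also have "\<dots> = x b" using x(2) ab by (simp add: sum_mult_centered_delta[OF finite_V])
  finally have Qx: "Q = x b" .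
  have "Q = (\<Sum>d\<in>V. \<Sum>c\<in>V. y d * ?L d c * x c)"
    unfolding Q_def by (subst sum.swap) (simp add: laplacian_sym mult.commute mult.left_commute)
  also have "\<dots> = (\<Sum>d\<in>V. y d * (\<Sum>c\<in>V. ?L d c * x c))"
    by (simp add: sum_distrib_left mult.assoc)
  also have "\<dots> = (\<Sum>d\<in>V. y d * ((if d = a then 1 else 0) - k))"
    using x(1) by (intro sum.cong) auto
  also have "\<dots> = y a" using y(2) ab by (simp add: sum_mult_centered_delta[OF finite_V])
  finally show ?thesis using Qx by simp
qed

lemma laplacian_centered_inverse:
  obtains M where "\<forall>a b. a \<notin> V \<or> b \<notin> V \<longrightarrow> M a b = 0"
    "\<And>a b. a \<in> V \<Longrightarrow> b \<in> V \<Longrightarrow>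
       matmul V (laplacian E src dst w) M a b = (if a = b then 1 else 0) - 1 / real (card V)"
    "\<And>a b. a \<in> V \<Longrightarrow> b \<in> V \<Longrightarrow> M a b = M b a"
    "\<And>b. b \<in> V \<Longrightarrow> (\<Sum>c\<in>V. M c b) = 0"
proof -
  let ?L = "laplacian E src dst w"
  define n where "n = real (card V)"
  have npos: "n > 0" using finite_V s_in_V card_gt_0_iff unfolding n_def by auto
  have ex: "\<exists>x. (\<forall>a\<in>V. (\<Sum>c\<in>V. ?L a c * x c) = (if a = b then 1 else 0) - 1 / n) \<and> (\<Sum>a\<in>V. x a) = 0"
    if b: "b \<in> V" for b
  proof (rule laplacian_solvable)
    have "(\<Sum>a\<in>V. (if a = b then 1 else 0) - 1 / n) = 1 - real (card V) * (1 / n)"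
      using b finite_V by (simp add: sum_subtractf sum.delta')
    then show "(\<Sum>a\<in>V. (if a = b then 1 else 0) - 1 / n) = 0" using npos unfolding n_def by simp
  qed
  define colv where "colv b = (SOME x. (\<forall>a\<in>V. (\<Sum>c\<in>V. ?L a c * x c) = (if a = b then 1 else 0) - 1 / n) \<and> (\<Sum>a\<in>V. x a) = 0)" for b
  have colv: "(\<forall>a\<in>V. (\<Sum>c\<in>V. ?L a c * colv b c) = (if a = b then 1 else 0) - 1 / n) \<and> (\<Sum>a\<in>V. colv b a) = 0"
    if "b \<in> V" for b
    unfolding colv_def by (rule someI_ex[OF ex[OF that]])
  define M where "M a b = (if a \<in> V \<and> b \<in> V then colv b a else 0)" for a b
  have symc: "colv a b = colv b a" if ab: "a \<in> V" "b \<in> V" for a b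
  proof -
    have "colv b a = colv a b"
      by (rule laplacian_centered_solution_sym[OF ab, where k = "1 / n"]) (use colv[OF ab(1)] colv[OF ab(2)] in simp_all)
    then show ?thesis by simp
  qed
  show ?thesis
  proof
    show "\<forall>a b. a \<notin> V \<or> b \<notin> V \<longrightarrow> M a b = 0" unfolding M_def by auto
    show "M a b = M b a" if "a \<in> V" "b \<in> V" for a b unfolding M_def using symc that by auto
    show "matmul V ?L M a b = (if a = b then 1 else 0) - 1 / real (card V)" if "a \<in> V" "b \<in> V" for a b
    proof -
      have "matmul V ?L M a b = (\<Sum>c\<in>V. ?L a c * colv b c)"
        unfolding matmul_def M_def using that by (intro sum.cong) auto
      then show ?thesis using colv that unfolding n_def by simp
    qed
    show "(\<Sum>c\<in>V. M c b) = 0" if "b \<in> V" for b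
    proof -
      have "(\<Sum>c\<in>V. M c b) = (\<Sum>c\<in>V. colv b c)" unfolding M_def using that by (intro sum.cong) auto
      then show ?thesis using colv that by simp
    qed
  qed
qed

lemma pinv_laplacian_eq:
  assumes Mz: "\<forall>a b. a \<notin> V \<or> b \<notin> V \<longrightarrow> M a b = 0"
    and LM: "\<And>a b. a \<in> V \<Longrightarrow> b \<in> V \<Longrightarrow>
       matmul V (laplacian E src dst w) M a b = (if a = b then 1 else 0) - 1 / real (card V)"
    and symM: "\<And>a b. a \<in> V \<Longrightarrow> b \<in> V \<Longrightarrow> M a b = M b a"
    and colsum: "\<And>b. b \<in> V \<Longrightarrow> (\<Sum>c\<in>V. M c b) = 0"
  shows "pinv V (laplacian E src dst w) = M"
proof -
  let ?L = "laplacian E src dst w" and ?n = "real (card V)"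
  have MLp: "matmul V M ?L a b = (if a = b then 1 else 0) - 1 / ?n" if ab: "a \<in> V" "b \<in> V" for a b
  proof -
    have "matmul V M ?L a b = matmul V ?L M b a"
      unfolding matmul_def using symM ab laplacian_sym by (intro sum.cong) (auto simp: mult.commute)
    then show ?thesis using LM[OF ab(2,1)] by auto
  qed
  have HM: "\<forall>a\<in>V. \<forall>b\<in>V. matmul V (matmul V ?L M) ?L a b = ?L a b \<and> matmul V (matmul V M ?L) M a b = M a b \<and>
        matmul V ?L M a b = matmul V ?L M b a \<and> matmul V M ?L a b = matmul V M ?L b a"
  proof (intro ballI conjI)
    fix a b assume a: "a \<in> V" and b: "b \<in> V"
    have "matmul V (matmul V ?L M) ?L a b = (\<Sum>c\<in>V. ((if a = c then 1 else 0) - 1 / ?n) * ?L c b)"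
      unfolding matmul_def[of V "matmul V ?L M"] using LM a by (intro sum.cong) auto
    also have "\<dots> = ?L a b" using a by (simp add: laplacian_col_sum sum_centered_delta_mult[OF finite_V])
    finally show "matmul V (matmul V ?L M) ?L a b = ?L a b" .
    have "matmul V (matmul V M ?L) M a b = (\<Sum>c\<in>V. ((if a = c then 1 else 0) - 1 / ?n) * M c b)"
      unfolding matmul_def[of V "matmul V M ?L"] using MLp a by (intro sum.cong) auto
    also have "\<dots> = M a b" using a b by (simp add: colsum sum_centered_delta_mult[OF finite_V])
    finally show "matmul V (matmul V M ?L) M a b = M a b" .
    show "matmul V ?L M a b = matmul V ?L M b a" using LM a b by auto
    show "matmul V M ?L a b = matmul V M ?L b a" using MLp a b by auto
  qed
  have restrict: "restrict_mat V Z = Z" if "\<forall>a b. a \<notin> V \<or> b \<notin> V \<longrightarrow> Z a b = 0" for Z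
    using that by (auto simp: restrict_mat_def fun_eq_iff)
  have trL: "transp_mat (restrict_mat V ?L) = restrict_mat V ?L"
    unfolding transp_restrict transp_mat_def by (simp add: restrict_mat_def fun_eq_iff laplacian_sym)
  show ?thesis
    unfolding pinv_def
  proof (rule the_equality)
    show "(\<forall>a b. a \<notin> V \<or> b \<notin> V \<longrightarrow> M a b = 0) \<and> (\<forall>a\<in>V. \<forall>b\<in>V. matmul V (matmul V ?L M) ?L a b = ?L a b \<and>
        matmul V (matmul V M ?L) M a b = M a b \<and> matmul V ?L M a b = matmul V ?L M b a \<and> matmul V M ?L a b = matmul V M ?L b a)"
      using Mz HM by blast
    fix M' assume h: "(\<forall>a b. a \<notin> V \<or> b \<notin> V \<longrightarrow> M' a b = 0) \<and> (\<forall>a\<in>V. \<forall>b\<in>V. matmul V (matmul V ?L M') ?L a b = ?L a b \<and>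
        matmul V (matmul V M' ?L) M' a b = M' a b \<and> matmul V ?L M' a b = matmul V ?L M' b a \<and> matmul V M' ?L a b = matmul V M' ?L b a)"
    note c1 = penrose_restrict[OF restrict, of M' ?L] h
    note c2 = penrose_restrict[OF restrict[OF Mz] HM]
    show "M' = M"
      by (rule penrose_unique[OF finite_V trL]) (use c1 c2 in auto)
  qed
qed

lemma laplacian_pinv_solves:
  assumes "a \<in> V"
  shows "(\<Sum>b\<in>V. laplacian E src dst w a b * mvec V (pinv V (laplacian E src dst w)) chi b) = chi a"
proof -
  let ?L = "laplacian E src dst w"
  obtain M where M: "\<forall>a b. a \<notin> V \<or> b \<notin> V \<longrightarrow> M a b = 0"
      "\<And>a b. a \<in> V \<Longrightarrow> b \<in> V \<Longrightarrow> matmul V ?L M a b = (if a = b then 1 else 0) - 1 / real (card V)"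
      "\<And>a b. a \<in> V \<Longrightarrow> b \<in> V \<Longrightarrow> M a b = M b a" "\<And>b. b \<in> V \<Longrightarrow> (\<Sum>c\<in>V. M c b) = 0"
    using laplacian_centered_inverse by blast
  have "(\<Sum>b\<in>V. ?L a b * mvec V M chi b) = (\<Sum>c\<in>V. chi c * matmul V ?L M a c)"
    unfolding mvec_def matmul_def
    by (simp add: sum_distrib_left sum_distrib_right) (subst sum.swap, simp add: ac_simps)
  also have "\<dots> = (\<Sum>c\<in>V. chi c * ((if c = a then 1 else 0) - 1 / real (card V)))"
    using M(2) assms by (intro sum.cong) auto
  also have "\<dots> = chi a" using assms chi_sum_zero by (simp add: sum_mult_centered_delta[OF finite_V])
  finally show ?thesis by (simp only: pinv_laplacian_eq[OF M])
qed

abbreviation "xstar \<equiv> mvec V (pinv V (laplacian E src dst w)) chi"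
abbreviation "fstar \<equiv> (\<lambda>e. if e \<in> E then w e * (xstar (src e) - xstar (dst e)) else 0)"

lemma fstar_feasible: "feasible V E src dst chi fstar"
  unfolding feasible_def
proof
  fix c assume c: "c \<in> V"
  have "(\<Sum>e\<in>E. inc src dst e c * fstar e) = (\<Sum>e\<in>E. inc src dst e c * w e * (xstar (src e) - xstar (dst e)))"
    by (intro sum.cong) auto
  also have "\<dots> = (\<Sum>b\<in>V. laplacian E src dst w c b * xstar b)" by (rule laplacian_apply[symmetric])
  also have "\<dots> = chi c" using laplacian_pinv_solves[OF c] .
  finally show "(\<Sum>e\<in>E. inc src dst e c * fstar e) = chi c" .
qed

lemma res_mult_fstar: "e \<in> E \<Longrightarrow> res w e * fstar e = xstar (src e) - xstar (dst e)"
  using w_mult_res[of e] by (simp add: mult.assoc[symmetric] mult.commute[of "res w e"])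

lemma fstar_orthogonal:
  assumes "\<forall>c\<in>V. (\<Sum>e\<in>E. inc src dst e c * h e) = 0"
  shows "(\<Sum>e\<in>E. res w e * fstar e * h e) = 0"
proof -
  have "(\<Sum>e\<in>E. res w e * fstar e * h e) = (\<Sum>e\<in>E. h e * (xstar (src e) - xstar (dst e)))"
    using res_mult_fstar by (intro sum.cong) (auto simp: mult.commute)
  also have "\<dots> = (\<Sum>c\<in>V. xstar c * (\<Sum>e\<in>E. inc src dst e c * h e))" by (rule incidence_adjoint)
  also have "\<dots> = 0" using assms by simp
  finally show ?thesis .
qed

lemma feasible_diff_circulation:
  assumes "feasible V E src dst chi f"
  shows "\<forall>c\<in>V. (\<Sum>e\<in>E. inc src dst e c * (f e - fstar e)) = 0"
proof
  fix c assume c: "c \<in> V"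
  have "(\<Sum>e\<in>E. inc src dst e c * (f e - fstar e)) = (\<Sum>e\<in>E. inc src dst e c * f e) - (\<Sum>e\<in>E. inc src dst e c * fstar e)"
    by (simp add: right_diff_distrib sum_subtractf)
  then show "(\<Sum>e\<in>E. inc src dst e c * (f e - fstar e)) = 0"
    using assms fstar_feasible c unfolding feasible_def by simp
qed

lemma energy_nonneg: "energy E w f \<ge> 0"
  unfolding energy_def using res_pos by (intro sum_nonneg) (simp add: less_imp_le)

lemma energy_pythagoras:
  assumes "feasible V E src dst chi f"
  shows "energy E w f = energy E w fstar + energy E w (\<lambda>e. f e - fstar e)"
proof -
  have o: "(\<Sum>e\<in>E. res w e * fstar e * (f e - fstar e)) = 0" using fstar_orthogonal[OF feasible_diff_circulation[OF assms]] .
  have "energy E w f = (\<Sum>e\<in>E. res w e * (fstar e)\<^sup>2 + 2 * (res w e * fstar e * (f e - fstar e)) + res w e * (f e - fstar e)\<^sup>2)"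
    unfolding energy_def by (intro sum.cong) (auto simp: power2_eq_square algebra_simps)
  also have "\<dots> = energy E w fstar + 2 * (\<Sum>e\<in>E. res w e * fstar e * (f e - fstar e)) + energy E w (\<lambda>e. f e - fstar e)"
    unfolding energy_def by (simp add: sum.distrib sum_distrib_left)
  finally show ?thesis using o by simp
qed

lemma opt_flow_eq_fstar: "opt_flow V E src dst w chi = fstar"
  unfolding opt_flow_def
proof (rule the_equality)
  show "(\<forall>e. e \<notin> E \<longrightarrow> fstar e = 0) \<and> feasible V E src dst chi fstar \<and>
    (\<forall>g. (\<forall>e. e \<notin> E \<longrightarrow> g e = 0) \<longrightarrow> feasible V E src dst chi g \<longrightarrow> energy E w fstar \<le> energy E w g)"
  proof (intro conjI allI impI)
    show "\<And>e. e \<notin> E \<Longrightarrow> fstar e = 0" by simp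
    show "feasible V E src dst chi fstar" by (rule fstar_feasible)
    fix g assume "feasible V E src dst chi g"
    then have "energy E w g = energy E w fstar + energy E w (\<lambda>e. g e - fstar e)" by (rule energy_pythagoras)
    then show "energy E w fstar \<le> energy E w g" using energy_nonneg[of "\<lambda>e. g e - fstar e"] by linarith
  qed
next
  fix f assume h: "(\<forall>e. e \<notin> E \<longrightarrow> f e = 0) \<and> feasible V E src dst chi f \<and>
    (\<forall>g. (\<forall>e. e \<notin> E \<longrightarrow> g e = 0) \<longrightarrow> feasible V E src dst chi g \<longrightarrow> energy E w f \<le> energy E w g)"
  have "energy E w f \<le> energy E w fstar" using h fstar_feasible by auto
  then have z: "energy E w (\<lambda>e. f e - fstar e) \<le> 0" using energy_pythagoras h by simp
  have nn: "\<And>e. e \<in> E \<Longrightarrow> 0 \<le> res w e * (f e - fstar e)\<^sup>2" using res_pos by (simp add: less_imp_le)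
  have "energy E w (\<lambda>e. f e - fstar e) = 0" using z energy_nonneg[of "\<lambda>e. f e - fstar e"] by simp
  then have "(\<Sum>e\<in>E. res w e * (f e - fstar e)\<^sup>2) = 0" unfolding energy_def .
  then have "\<forall>e\<in>E. res w e * (f e - fstar e)\<^sup>2 = 0"
    using sum_nonneg_eq_0_iff[OF finite_E, of "\<lambda>e. res w e * (f e - fstar e)\<^sup>2"] nn by blast
  show "f = fstar"
  proof
    fix e show "f e = fstar e"
    proof (cases "e \<in> E")
      case True
      then have "res w e * (f e - fstar e)\<^sup>2 = 0" using \<open>\<forall>e\<in>E. _\<close> by blast
      then show ?thesis using res_pos[OF True] by simp
    next
      case False then show ?thesis using h by simp
    qed
  qed
qed

lemma tree_volt_diff:
  assumes "e \<in> E"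
  shows "tree_volt E src dst w T s f (src e) - tree_volt E src dst w T s f (dst e)
       = (\<Sum>e'\<in>E. res w e' * f e' * tree_flow src dst T (src e) (dst e) e')"
proof -
  have en: "src e \<in> V" "dst e \<in> V" using edge_ends assms by auto
  have "tree_volt E src dst w T s f (src e) - tree_volt E src dst w T s f (dst e)
      = (\<Sum>e'\<in>E. res w e' * f e' * (tree_flow src dst T (src e) s e' - tree_flow src dst T (dst e) s e'))"
    unfolding tree_volt_def by (simp add: sum_subtractf right_diff_distrib)
  also have "\<dots> = (\<Sum>e'\<in>E. res w e' * f e' * tree_flow src dst T (src e) (dst e) e')"
    using fun_cong[OF tree_flow_via_root[OF en]] by simp
  finally show ?thesis .
qed

lemma xstar_diff:
  assumes "e \<in> E"
  shows "xstar (src e) - xstar (dst e) = (\<Sum>e'\<in>E. res w e' * fstar e' * tree_flow src dst T (src e) (dst e) e')"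
proof -
  have en: "src e \<in> V" "dst e \<in> V" "src e \<noteq> dst e" using edge_ends assms by auto
  have "(\<Sum>e'\<in>E. res w e' * fstar e' * tree_flow src dst T (src e) (dst e) e')
      = (\<Sum>e'\<in>E. tree_flow src dst T (src e) (dst e) e' * (xstar (src e') - xstar (dst e')))"
    using res_mult_fstar by (intro sum.cong) (auto simp: mult.commute)
  also have "\<dots> = (\<Sum>c\<in>V. xstar c * ((if c = src e then 1 else 0) - (if c = dst e then 1 else 0)))"
    unfolding incidence_adjoint using tree_flow_divergence[OF en(1,2)] by simp
  also have "\<dots> = (\<Sum>c\<in>V. (if c = src e then xstar c else 0) - (if c = dst e then xstar c else 0))"
    by (intro sum.cong) auto
  also have "\<dots> = xstar (src e) - xstar (dst e)" using en finite_V by (simp add: sum_subtractf sum.delta')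
  finally show ?thesis by simp
qed

lemma sum_tree_flow_edge:
  assumes "e \<in> T"
  shows "(\<Sum>e'\<in>E. h e' * tree_flow src dst T (src e) (dst e) e') = h e"
proof -
  have "(\<Sum>e'\<in>E. h e' * tree_flow src dst T (src e) (dst e) e') = (\<Sum>e'\<in>E. if e' = e then h e' else 0)"
    unfolding tree_flow_edge[OF assms] by (intro sum.cong) auto
  also have "\<dots> = h e" using assms T_subset_E finite_E by (auto simp: sum.delta')
  finally show ?thesis .
qed

lemma cycle_res_eq:
  assumes "e \<in> E - T"
  shows "cycle_res E src dst w T e = res w e + (\<Sum>e'\<in>E. res w e' * (tree_flow src dst T (src e) (dst e) e')\<^sup>2)"
proof -
  have "cycle_res E src dst w T e = (\<Sum>e'\<in>E. (if e' = e then res w e' else 0) + res w e' * (tree_flow src dst T (src e) (dst e) e')\<^sup>2)"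
    unfolding cycle_res_def cycle_vec_def using assms by (intro sum.cong) (auto simp: tree_flow_outside power2_eq_square algebra_simps)
  also have "\<dots> = res w e + (\<Sum>e'\<in>E. res w e' * (tree_flow src dst T (src e) (dst e) e')\<^sup>2)"
    using assms finite_E by (simp add: sum.distrib sum.delta')
  finally show ?thesis .
qed

lemma tree_flow_energy_le:
  assumes "e \<in> E"
  shows "(\<Sum>e'\<in>E. res w e' * (tree_flow src dst T (src e) (dst e) e')\<^sup>2) \<le> (\<Sum>e'\<in>path_edges src dst T (src e) (dst e). res w e')"
proof -
  have en: "src e \<in> V" "dst e \<in> V" using edge_ends assms by auto
  have "(\<Sum>e'\<in>E. res w e' * (tree_flow src dst T (src e) (dst e) e')\<^sup>2)
     \<le> (\<Sum>e'\<in>E. res w e' * (if e' \<in> path_edges src dst T (src e) (dst e) then 1 else 0))"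
    using tree_flow_sq_le[OF en] res_pos by (intro sum_mono mult_left_mono) (auto simp: less_imp_le)
  also have "\<dots> = (\<Sum>e'\<in>E \<inter> path_edges src dst T (src e) (dst e). res w e')"
    by (simp add: sum.inter_restrict[OF finite_E] if_distrib cong: if_cong)
  also have "E \<inter> path_edges src dst T (src e) (dst e) = path_edges src dst T (src e) (dst e)"
    using path_edges_subset T_subset_E by auto
  finally show ?thesis .
qed

lemma tree_flow_Cauchy_Schwarz:
  assumes "e \<in> E"
  shows "(\<Sum>e'\<in>E. res w e' * g e' * tree_flow src dst T (src e) (dst e) e')\<^sup>2
     \<le> (\<Sum>e'\<in>E. res w e' * (tree_flow src dst T (src e) (dst e) e')\<^sup>2) * (\<Sum>e'\<in>T. res w e' * (g e')\<^sup>2)"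
proof -
  let ?p = "tree_flow src dst T (src e) (dst e)"
  define gT where "gT e' = (if e' \<in> T then g e' else 0)" for e'
  have "(\<Sum>e'\<in>E. res w e' * g e' * ?p e') = (\<Sum>e'\<in>E. res w e' * ?p e' * gT e')"
    unfolding gT_def by (intro sum.cong) (auto simp: tree_flow_outside)
  also have "(\<dots>)\<^sup>2 \<le> (\<Sum>e'\<in>E. res w e' * (?p e')\<^sup>2) * (\<Sum>e'\<in>E. res w e' * (gT e')\<^sup>2)"
    using res_pos by (intro weighted_Cauchy_Schwarz) (auto simp: less_imp_le)
  also have "(\<Sum>e'\<in>E. res w e' * (gT e')\<^sup>2) = (\<Sum>e'\<in>T. res w e' * (g e')\<^sup>2)"
    unfolding gT_def by (rule sum.mono_neutral_cong_right[OF finite_E T_subset_E]) auto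
  finally show ?thesis .
qed

lemma tree_energy_le: "(\<Sum>e'\<in>T. res w e' * (g e')\<^sup>2) \<le> energy E w g"
  unfolding energy_def using res_pos T_subset_E by (intro sum_mono2[OF finite_E]) (auto simp: less_imp_le)

lemma tcond_ge_card: "tcond E src dst w T \<ge> real (card (E - T))"
proof -
  have "tcond E src dst w T \<ge> (\<Sum>e\<in>E - T. 1)"
    unfolding tcond_def
  proof (intro sum_mono)
    fix e assume e: "e \<in> E - T"
    have "res w e \<le> cycle_res E src dst w T e"
      using cycle_res_eq[OF e] res_pos by (auto intro!: sum_nonneg simp: less_imp_le)
    then show "1 \<le> cycle_res E src dst w T e / res w e" using res_pos e by simp
  qed
  then show ?thesis by simp
qed

lemma tcond_ge1: "tcond E src dst w T \<ge> 1"
proof -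
  have "card (E - T) \<ge> 1" using off_tree_nonempty finite_E by (simp add: Suc_le_eq card_gt_0_iff)
  then show ?thesis using tcond_ge_card by linarith
qed

lemma mnorm_laplacian_sq:
  "(mnorm V (laplacian E src dst w) y)\<^sup>2 = (\<Sum>e\<in>E. w e * (y (src e) - y (dst e))\<^sup>2)"
proof -
  have "0 \<le> (\<Sum>e\<in>E. w e * (y (src e) - y (dst e))\<^sup>2)"
    using w_pos by (intro sum_nonneg) (simp add: less_imp_le)
  then show ?thesis unfolding mnorm_def laplacian_quadratic_form by simp
qed

lemma tree_volt_diff_tree_edge:
  assumes "e \<in> T"
  shows "tree_volt E src dst w T s g (src e) - tree_volt E src dst w T s g (dst e) = res w e * g e"
  using tree_volt_diff[of e g] sum_tree_flow_edge[OF assms, of "\<lambda>e'. res w e' * g e'"] assms T_subset_E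
  by auto

lemma tree_volt_diff_sq_le:
  assumes "e \<in> E"
  shows "(tree_volt E src dst w T s g (src e) - tree_volt E src dst w T s g (dst e))\<^sup>2
     \<le> (\<Sum>e'\<in>E. res w e' * (tree_flow src dst T (src e) (dst e) e')\<^sup>2) * (\<Sum>e'\<in>T. res w e' * (g e')\<^sup>2)"
  unfolding tree_volt_diff[OF assms] by (rule tree_flow_Cauchy_Schwarz[OF assms])

lemma mnorm_tree_volt_sq_le:
  "(mnorm V (laplacian E src dst w) (tree_volt E src dst w T s g))\<^sup>2
     \<le> tcond E src dst w T * (\<Sum>e\<in>T. res w e * (g e)\<^sup>2)"
proof -
  let ?u = "tree_volt E src dst w T s g" and ?\<tau> = "tcond E src dst w T"
  define \<xi>T where "\<xi>T = (\<Sum>e\<in>T. res w e * (g e)\<^sup>2)"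
  have \<xi>T: "\<xi>T \<ge> 0" unfolding \<xi>T_def using res_pos T_subset_E by (intro sum_nonneg) (auto simp: less_imp_le)
  have off_tree: "w e * (?u (src e) - ?u (dst e))\<^sup>2 \<le> (cycle_res E src dst w T e / res w e - 1) * \<xi>T"
    if e: "e \<in> E - T" for e
  proof -
    have eE: "e \<in> E" using e by auto
    have "(?u (src e) - ?u (dst e))\<^sup>2 \<le> (cycle_res E src dst w T e - res w e) * \<xi>T"
      using tree_volt_diff_sq_le[OF eE, of g] cycle_res_eq[OF e] unfolding \<xi>T_def by simp
    then have "w e * (?u (src e) - ?u (dst e))\<^sup>2 \<le> w e * ((cycle_res E src dst w T e - res w e) * \<xi>T)"
      using w_pos eE by (intro mult_left_mono) (auto simp: less_imp_le)
    also have "\<dots> = (cycle_res E src dst w T e / res w e - 1) * \<xi>T"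
      using res_pos[OF eE] by (simp add: res_def field_simps)
    finally show ?thesis .
  qed
  have on_tree: "(\<Sum>e\<in>T. w e * (?u (src e) - ?u (dst e))\<^sup>2) = \<xi>T"
    unfolding \<xi>T_def using T_subset_E w_mult_res
    by (intro sum.cong) (auto simp: tree_volt_diff_tree_edge power2_eq_square algebra_simps)
  have "(mnorm V (laplacian E src dst w) ?u)\<^sup>2
      = (\<Sum>e\<in>E - T. w e * (?u (src e) - ?u (dst e))\<^sup>2) + (\<Sum>e\<in>T. w e * (?u (src e) - ?u (dst e))\<^sup>2)"
    unfolding mnorm_laplacian_sq by (rule sum.subset_diff[OF T_subset_E finite_E])
  also have "\<dots> \<le> (\<Sum>e\<in>E - T. (cycle_res E src dst w T e / res w e - 1) * \<xi>T) + \<xi>T"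
    unfolding on_tree using off_tree by (intro add_right_mono sum_mono) auto
  also have "\<dots> = (?\<tau> - real (card (E - T))) * \<xi>T + \<xi>T"
    unfolding tcond_def by (simp add: sum_distrib_right[symmetric] sum_subtractf)
  also have "\<dots> \<le> ?\<tau> * \<xi>T"
  proof -
    have "1 \<le> real (card (E - T))" using off_tree_nonempty finite_E by (simp add: Suc_le_eq card_gt_0_iff)
    then have "\<xi>T \<le> real (card (E - T)) * \<xi>T" using \<xi>T mult_right_mono[of 1] by fastforce
    then show ?thesis by (simp add: algebra_simps)
  qed
  finally show ?thesis unfolding \<xi>T_def .
qed

lemma tree_volt_error_sq:
  assumes "feasible V E src dst chi f"
  shows "(mnorm V (laplacian E src dst w) (\<lambda>a. tree_volt E src dst w T s f a - xstar a))\<^sup>2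
     \<le> tcond E src dst w T * energy E w (\<lambda>e. f e - fstar e)"
proof -
  define g where "g e = f e - fstar e" for e
  let ?u = "tree_volt E src dst w T s g"
  have "(tree_volt E src dst w T s f (src e) - xstar (src e)) - (tree_volt E src dst w T s f (dst e) - xstar (dst e))
      = ?u (src e) - ?u (dst e)" if "e \<in> E" for e
    unfolding g_def using tree_volt_diff[OF that] xstar_diff[OF that]
    by (simp add: sum_subtractf[symmetric] algebra_simps)
  then have "mnorm V (laplacian E src dst w) (\<lambda>a. tree_volt E src dst w T s f a - xstar a)
      = mnorm V (laplacian E src dst w) ?u"
    by (simp add: mnorm_def laplacian_quadratic_form)
  also have "(\<dots>)\<^sup>2 \<le> tcond E src dst w T * (\<Sum>e\<in>T. res w e * (g e)\<^sup>2)"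
    by (rule mnorm_tree_volt_sq_le)
  also have "\<dots> \<le> tcond E src dst w T * energy E w g"
    using tcond_ge1 tree_energy_le[of g] by (intro mult_left_mono) auto
  finally show ?thesis unfolding g_def .
qed

abbreviation "f0 \<equiv> tree_flow0 V E src dst T chi"

lemma f0_outside: "e \<notin> T \<Longrightarrow> f0 e = 0"
  unfolding tree_flow0_eq by (simp add: tree_flow_outside)

lemma f0_feasible: "feasible V E src dst chi f0"
  unfolding tree_flow0_eq by (rule root_flow_feasible)

lemma stretch_nonneg: "e \<in> E \<Longrightarrow> stretch src dst w T e \<ge> 0"
  unfolding stretch_def using res_pos path_edges_subset T_subset_E
  by (intro mult_nonneg_nonneg sum_nonneg) (auto simp: less_imp_le subset_iff)

lemma tree_stretch_nonneg: "tree_stretch E src dst w T \<ge> 0"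
  unfolding tree_stretch_def using stretch_nonneg by (intro sum_nonneg) auto

lemma tree_stretch_ge1: "tree_stretch E src dst w T \<ge> 1"
proof -
  obtain e where e: "e \<in> E" "e \<notin> T" using off_tree_nonempty by blast
  have "{src e, dst e} \<subseteq> V" using edge_ends e by auto
  then have "card {src e, dst e} \<le> card V" using finite_V by (rule card_mono[rotated])
  then have "card V \<ge> 2" using edge_ends e by auto
  then have "card T \<ge> 1" using spanning unfolding spanning_tree_def by auto
  then obtain e0 where e0: "e0 \<in> T" using card_gt_0_iff by fastforce
  have e0E: "e0 \<in> E" using e0 T_subset_E by auto
  have "tree_flow src dst T (src e0) (dst e0) e0 = 1" using tree_flow_edge[OF e0] by simp
  then have inP: "e0 \<in> path_edges src dst T (src e0) (dst e0)" using tree_flow_support by force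
  have "res w e0 \<le> (\<Sum>e'\<in>path_edges src dst T (src e0) (dst e0). res w e')"
    using inP res_pos path_edges_subset T_subset_E finite_T
    by (intro member_le_sum) (auto simp: less_imp_le subset_iff intro: finite_subset[OF path_edges_subset])
  then have "1 \<le> stretch src dst w T e0"
    unfolding stretch_def using res_pos[OF e0E] by (simp add: field_simps)
  also have "\<dots> \<le> tree_stretch E src dst w T"
    unfolding tree_stretch_def using stretch_nonneg e0E finite_E by (intro member_le_sum) auto
  finally show ?thesis .
qed

lemma mnorm_tree_volt_sq_le_stretch:
  "(mnorm V (laplacian E src dst w) (tree_volt E src dst w T s g))\<^sup>2
     \<le> tree_stretch E src dst w T * (\<Sum>e\<in>T. res w e * (g e)\<^sup>2)"
proof -
  let ?u = "tree_volt E src dst w T s g"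
  define \<xi>T where "\<xi>T = (\<Sum>e\<in>T. res w e * (g e)\<^sup>2)"
  have \<xi>T: "\<xi>T \<ge> 0" unfolding \<xi>T_def using res_pos T_subset_E by (intro sum_nonneg) (auto simp: less_imp_le)
  have "w e * (?u (src e) - ?u (dst e))\<^sup>2 \<le> stretch src dst w T e * \<xi>T" if e: "e \<in> E" for e
  proof -
    have "(?u (src e) - ?u (dst e))\<^sup>2 \<le> (\<Sum>e'\<in>path_edges src dst T (src e) (dst e). res w e') * \<xi>T"
      using tree_volt_diff_sq_le[OF e, of g] tree_flow_energy_le[OF e] \<xi>T
      unfolding \<xi>T_def by (meson mult_right_mono order_trans)
    then have "w e * (?u (src e) - ?u (dst e))\<^sup>2 \<le> w e * ((\<Sum>e'\<in>path_edges src dst T (src e) (dst e). res w e') * \<xi>T)"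
      using w_pos e by (intro mult_left_mono) (auto simp: less_imp_le)
    then show ?thesis unfolding stretch_def one_div_res by simp
  qed
  then have "(mnorm V (laplacian E src dst w) ?u)\<^sup>2 \<le> (\<Sum>e\<in>E. stretch src dst w T e * \<xi>T)"
    unfolding mnorm_laplacian_sq by (rule sum_mono)
  then show ?thesis unfolding \<xi>T_def tree_stretch_def by (simp add: sum_distrib_right)
qed

lemma energy_tree_supported:
  assumes "\<forall>e. e \<notin> T \<longrightarrow> g e = 0"
  shows "energy E w g
     = (\<Sum>e\<in>E. g e * (tree_volt E src dst w T s g (src e) - tree_volt E src dst w T s g (dst e)))"
  unfolding energy_def
proof (intro sum.cong refl)
  fix e assume "e \<in> E"
  show "res w e * (g e)\<^sup>2 = g e * (tree_volt E src dst w T s g (src e) - tree_volt E src dst w T s g (dst e))"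
    using assms by (cases "e \<in> T") (auto simp: tree_volt_diff_tree_edge power2_eq_square)
qed

lemma feasible_potential_pairing:
  assumes "feasible V E src dst chi f" "feasible V E src dst chi g"
  shows "(\<Sum>e\<in>E. f e * (u (src e) - u (dst e))) = (\<Sum>e\<in>E. g e * (u (src e) - u (dst e)))"
  using assms unfolding incidence_adjoint feasible_def by simp

text \<open>Pair f0 with its own tree voltages u: the pairing equals that of f*, so by Cauchy-Schwarz
  energy f0 squared is at most energy f* times the Laplacian energy of u, which the stretch
  bounds by st(T) times energy f0.\<close>
lemma energy_f0_le_stretch: "energy E w f0 \<le> tree_stretch E src dst w T * energy E w fstar"
proof -
  let ?u = "tree_volt E src dst w T s f0" and ?st = "tree_stretch E src dst w T"
  define \<xi>0 where "\<xi>0 = energy E w f0"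
  define \<xi>s where "\<xi>s = energy E w fstar"
  have "\<xi>0 = (\<Sum>e\<in>E. f0 e * (?u (src e) - ?u (dst e)))"
    unfolding \<xi>0_def using f0_outside by (intro energy_tree_supported) blast
  also have "\<dots> = (\<Sum>e\<in>E. fstar e * (?u (src e) - ?u (dst e)))"
    by (rule feasible_potential_pairing[OF f0_feasible fstar_feasible])
  also have "\<dots> = (\<Sum>e\<in>E. res w e * fstar e * (w e * (?u (src e) - ?u (dst e))))"
    using w_mult_res by (intro sum.cong) (auto simp: ac_simps)
  finally have x0: "\<xi>0 = \<dots>" .
  have "\<xi>0\<^sup>2 \<le> (\<Sum>e\<in>E. res w e * (fstar e)\<^sup>2) * (\<Sum>e\<in>E. res w e * (w e * (?u (src e) - ?u (dst e)))\<^sup>2)"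
    unfolding x0 by (rule weighted_Cauchy_Schwarz) (use res_pos in \<open>auto simp: less_imp_le\<close>)
  also have "(\<Sum>e\<in>E. res w e * (w e * (?u (src e) - ?u (dst e)))\<^sup>2) = (mnorm V (laplacian E src dst w) ?u)\<^sup>2"
    unfolding mnorm_laplacian_sq using w_mult_res
    by (intro sum.cong) (auto simp: power2_eq_square ac_simps)
  also have "(\<Sum>e\<in>E. res w e * (fstar e)\<^sup>2) = \<xi>s" unfolding \<xi>s_def energy_def ..
  also have "\<xi>s * (mnorm V (laplacian E src dst w) ?u)\<^sup>2 \<le> \<xi>s * (?st * \<xi>0)"
    using mnorm_tree_volt_sq_le_stretch[of f0] tree_energy_le[of f0] tree_stretch_nonneg
      energy_nonneg[of fstar] unfolding \<xi>0_def \<xi>s_def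
    by (meson mult_left_mono order_trans)
  finally have "\<xi>0\<^sup>2 \<le> \<xi>0 * (?st * \<xi>s)" by (simp add: mult.commute mult.left_commute)
  moreover have "0 \<le> ?st * \<xi>s"
    unfolding \<xi>s_def using tree_stretch_nonneg energy_nonneg[of fstar] by simp
  ultimately show ?thesis unfolding \<xi>0_def \<xi>s_def by (rule power2_le_mult_imp_le[rotated])
qed

abbreviation "upd \<equiv> cyc_update E src dst w T"

lemma cycle_res_pos:
  assumes "e \<in> E - T"
  shows "cycle_res E src dst w T e > 0"
proof -
  have "0 \<le> (\<Sum>e'\<in>E. res w e' * (tree_flow src dst T (src e) (dst e) e')\<^sup>2)"
    using res_pos by (intro sum_nonneg) (auto simp: less_imp_le)
  then show ?thesis using cycle_res_eq[OF assms] res_pos[of e] assms by simp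
qed

lemma cyc_update_feasible:
  assumes e: "e \<in> E - T" and f: "feasible V E src dst chi f"
  shows "feasible V E src dst chi (upd f e)"
  unfolding feasible_def
proof
  fix c assume c: "c \<in> V"
  define a where "a = Delta E src dst w T e f / cycle_res E src dst w T e"
  have u: "upd f e = (\<lambda>e'. f e' - a * cycle_vec src dst T e e')" unfolding cyc_update_def a_def by simp
  have "(\<Sum>e'\<in>E. inc src dst e' c * upd f e e') = (\<Sum>e'\<in>E. inc src dst e' c * f e') - a * (\<Sum>e'\<in>E. inc src dst e' c * cycle_vec src dst T e e')"
    unfolding u by (simp add: right_diff_distrib sum_subtractf sum_distrib_left mult.left_commute)
  then show "(\<Sum>e'\<in>E. inc src dst e' c * upd f e e') = chi c" using f c cycle_vec_circulation[OF e] unfolding feasible_def by simp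
qed

lemma energy_cyc_update:
  assumes e: "e \<in> E - T"
  shows "energy E w (upd f e) = energy E w f - (Delta E src dst w T e f)\<^sup>2 / cycle_res E src dst w T e"
proof -
  define D where "D = Delta E src dst w T e f"
  define R where "R = cycle_res E src dst w T e"
  have R: "R > 0" unfolding R_def using cycle_res_pos[OF e] .
  let ?c = "cycle_vec src dst T e"
  have "energy E w (upd f e) = (\<Sum>e'\<in>E. res w e' * (f e')\<^sup>2 - 2 * (D / R) * (f e' * res w e' * ?c e') + (D / R)\<^sup>2 * (res w e' * (?c e')\<^sup>2))"
    unfolding energy_def cyc_update_def D_def[symmetric] R_def[symmetric]
    by (intro sum.cong) (auto simp: power2_eq_square algebra_simps)
  also have "\<dots> = energy E w f - 2 * (D / R) * D + (D / R)\<^sup>2 * R"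
    unfolding energy_def D_def R_def Delta_def cycle_res_def
    by (simp add: sum.distrib sum_subtractf sum_distrib_left)
  also have "\<dots> = energy E w f - D\<^sup>2 / R" using R by (simp add: power2_eq_square field_simps)
  finally show ?thesis unfolding D_def R_def .
qed

lemma Delta_eq_error:
  assumes e: "e \<in> E - T"
  shows "Delta E src dst w T e f = (\<Sum>e'\<in>E. res w e' * (f e' - fstar e') * cycle_vec src dst T e e')"
proof -
  have o: "(\<Sum>e'\<in>E. res w e' * fstar e' * cycle_vec src dst T e e') = 0"
    by (rule fstar_orthogonal) (use cycle_vec_circulation[OF e] in blast)
  have "Delta E src dst w T e f = (\<Sum>e'\<in>E. res w e' * (f e' - fstar e') * cycle_vec src dst T e e') + (\<Sum>e'\<in>E. res w e' * fstar e' * cycle_vec src dst T e e')"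
    unfolding Delta_def by (simp add: sum.distrib[symmetric] algebra_simps)
  then show ?thesis using o by simp
qed

lemma energy_error_eq_sum_Delta:
  assumes f: "feasible V E src dst chi f"
  shows "energy E w (\<lambda>e. f e - fstar e) = (\<Sum>e\<in>E - T. (f e - fstar e) * Delta E src dst w T e f)"
proof -
  define g where "g e = (if e \<in> E then f e - fstar e else 0)" for e
  have "g = (\<lambda>e'. \<Sum>e\<in>E - T. g e * cycle_vec src dst T e e')"
    using feasible_diff_circulation[OF f] unfolding g_def
    by (intro circulation_cycle_decomposition) auto
  then have dec: "g e' = (\<Sum>e\<in>E - T. g e * cycle_vec src dst T e e')" for e'
    by (metis (no_types, lifting))
  have "energy E w (\<lambda>e. f e - fstar e) = (\<Sum>e'\<in>E. res w e' * g e' * g e')"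
    unfolding energy_def g_def by (intro sum.cong) (auto simp: power2_eq_square)
  also have "\<dots> = (\<Sum>e'\<in>E. res w e' * g e' * (\<Sum>e\<in>E - T. g e * cycle_vec src dst T e e'))"
  proof (rule sum.cong[OF refl])
    fix e' show "res w e' * g e' * g e' = res w e' * g e' * (\<Sum>e\<in>E - T. g e * cycle_vec src dst T e e')"
      by (rule arg_cong[where f = "\<lambda>t. res w e' * g e' * t", OF dec])
  qed
  also have "\<dots> = (\<Sum>e\<in>E - T. g e * (\<Sum>e'\<in>E. res w e' * g e' * cycle_vec src dst T e e'))"
    by (simp add: sum_distrib_left sum.swap[of _ "E - T"] algebra_simps)
  also have "\<dots> = (\<Sum>e\<in>E - T. (f e - fstar e) * Delta E src dst w T e f)"
    unfolding g_def using Delta_eq_error by (intro sum.cong) auto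
  finally show ?thesis .
qed

lemma energy_error_le_Delta:
  assumes f: "feasible V E src dst chi f"
  shows "energy E w (\<lambda>e. f e - fstar e) \<le> (\<Sum>e\<in>E - T. (Delta E src dst w T e f)\<^sup>2 / res w e)"
proof -
  let ?D = "\<lambda>e. Delta E src dst w T e f" and ?g = "\<lambda>e. f e - fstar e"
  define \<xi> where "\<xi> = energy E w ?g"
  have x: "\<xi> = (\<Sum>e\<in>E - T. res w e * ?g e * (?D e / res w e))"
    unfolding \<xi>_def energy_error_eq_sum_Delta[OF f]
  proof (intro sum.cong refl)
    fix e assume "e \<in> E - T"
    then have "res w e \<noteq> 0" using res_pos by force
    then show "?g e * ?D e = res w e * ?g e * (?D e / res w e)" by simp
  qed
  have B: "0 \<le> (\<Sum>e\<in>E - T. (?D e)\<^sup>2 / res w e)"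
    using res_pos by (intro sum_nonneg) (auto simp: less_imp_le)
  have "\<xi>\<^sup>2 \<le> (\<Sum>e\<in>E - T. res w e * (?g e)\<^sup>2) * (\<Sum>e\<in>E - T. res w e * (?D e / res w e)\<^sup>2)"
    unfolding x by (rule weighted_Cauchy_Schwarz) (use res_pos in \<open>auto simp: less_imp_le\<close>)
  also have "(\<Sum>e\<in>E - T. res w e * (?D e / res w e)\<^sup>2) = (\<Sum>e\<in>E - T. (?D e)\<^sup>2 / res w e)"
    using res_pos by (intro sum.cong) (auto simp: power2_eq_square)
  also have "(\<Sum>e\<in>E - T. res w e * (?g e)\<^sup>2) * (\<Sum>e\<in>E - T. (?D e)\<^sup>2 / res w e)
      \<le> \<xi> * (\<Sum>e\<in>E - T. (?D e)\<^sup>2 / res w e)"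
  proof (rule mult_right_mono[OF _ B])
    show "(\<Sum>e\<in>E - T. res w e * (?g e)\<^sup>2) \<le> \<xi>"
      unfolding \<xi>_def energy_def using res_pos
      by (intro sum_mono2[OF finite_E]) (auto simp: less_imp_le)
  qed
  finally show ?thesis
    using B unfolding \<xi>_def by (rule power2_le_mult_imp_le[rotated])
qed

end

section \<open>Analysis of the randomized cycle updates\<close>

definition iter_exp ::
    "'e set \<Rightarrow> ('e \<Rightarrow> 'v) \<Rightarrow> ('e \<Rightarrow> 'v) \<Rightarrow> ('e \<Rightarrow> real) \<Rightarrow> 'e set \<Rightarrow> nat \<Rightarrow>
      ('e \<Rightarrow> real) \<Rightarrow> (('e \<Rightarrow> real) \<Rightarrow> real) \<Rightarrow> real" where
  "iter_exp E src dst w T K f h =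
     (\<Sum>es\<in>{es. set es \<subseteq> E - T \<and> length es = K}.
        prod_list (map (cyc_prob E src dst w T) es) * h (foldl (cyc_update E src dst w T) f es))"

lemma lists_length_Suc:
  "{es. set es \<subseteq> S \<and> length es = Suc K} = (\<lambda>(e, es). e # es) ` (S \<times> {es. set es \<subseteq> S \<and> length es = K})"
proof (intro set_eqI iffI)
  fix xs assume "xs \<in> {es. set es \<subseteq> S \<and> length es = Suc K}"
  then obtain e es where "xs = e # es" "e \<in> S" "set es \<subseteq> S" "length es = K"
    by (cases xs) auto
  then show "xs \<in> (\<lambda>(e, es). e # es) ` (S \<times> {es. set es \<subseteq> S \<and> length es = K})" by force
qed auto

context tree_network
begin

abbreviation "pr \<equiv> cyc_prob E src dst w T"
abbreviation "tau \<equiv> tcond E src dst w T"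

lemma tau_pos: "tau > 0" using tcond_ge1 by simp

lemma cyc_prob_nonneg: "e \<in> E - T \<Longrightarrow> pr e \<ge> 0"
  unfolding cyc_prob_def using cycle_res_pos[of e] res_pos[of e] tau_pos by (auto intro!: divide_nonneg_pos mult_pos_pos less_imp_le)

lemma sum_cyc_prob: "(\<Sum>e\<in>E - T. pr e) = 1"
proof -
  have "(\<Sum>e\<in>E - T. pr e) = (\<Sum>e\<in>E - T. cycle_res E src dst w T e / res w e) / tau"
    unfolding cyc_prob_def by (simp add: sum_divide_distrib divide_divide_eq_left mult.commute)
  then show ?thesis using tau_pos unfolding tcond_def by simp
qed

lemma iter_exp_0: "iter_exp E src dst w T 0 f h = h f"
proof -
  have "{es. set es \<subseteq> E - T \<and> length es = 0} = {[]}" by auto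
  then show ?thesis unfolding iter_exp_def by simp
qed

lemma iter_exp_Suc: "iter_exp E src dst w T (Suc K) f h = (\<Sum>e\<in>E - T. pr e * iter_exp E src dst w T K (upd f e) h)"
proof -
  let ?L = "{es. set es \<subseteq> E - T \<and> length es = K}"
  have inj: "inj_on (\<lambda>(e, es). e # es) ((E - T) \<times> ?L)" by (auto simp: inj_on_def)
  have "iter_exp E src dst w T (Suc K) f h
     = (\<Sum>x\<in>(E - T) \<times> ?L. prod_list (map pr (fst x # snd x)) * h (foldl upd f (fst x # snd x)))"
    unfolding iter_exp_def lists_length_Suc by (subst sum.reindex[OF inj]) (simp add: case_prod_beta)
  also have "\<dots> = (\<Sum>e\<in>E - T. \<Sum>es\<in>?L. prod_list (map pr (e # es)) * h (foldl upd f (e # es)))"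
    by (rule sum.cartesian_product[symmetric, unfolded case_prod_beta])
  also have "\<dots> = (\<Sum>e\<in>E - T. pr e * iter_exp E src dst w T K (upd f e) h)"
    unfolding iter_exp_def by (simp add: sum_distrib_left mult.assoc)
  finally show ?thesis .
qed

lemma iter_exp_const_one: "iter_exp E src dst w T K f (\<lambda>_. 1) = 1"
proof (induction K arbitrary: f)
  case 0 then show ?case by (simp add: iter_exp_0)
next
  case (Suc K) then show ?case by (simp add: iter_exp_Suc sum_cyc_prob)
qed

lemma iter_exp_affine: "iter_exp E src dst w T K f (\<lambda>g. c + d * h g) = c + d * iter_exp E src dst w T K f h"
proof -
  have "iter_exp E src dst w T K f (\<lambda>g. c + d * h g) = c * iter_exp E src dst w T K f (\<lambda>_. 1) + d * iter_exp E src dst w T K f h"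
    unfolding iter_exp_def by (simp add: algebra_simps sum.distrib sum_distrib_left)
  then show ?thesis by (simp add: iter_exp_const_one)
qed

lemma feasible_foldl_update:
  "feasible V E src dst chi f \<Longrightarrow> set es \<subseteq> E - T \<Longrightarrow> feasible V E src dst chi (foldl upd f es)"
proof (induction es arbitrary: f)
  case (Cons e es) then show ?case using cyc_update_feasible by simp
qed simp

lemma prod_cyc_prob_nonneg: "set es \<subseteq> E - T \<Longrightarrow> prod_list (map pr es) \<ge> 0"
proof (induction es)
  case (Cons e es) then show ?case using cyc_prob_nonneg by simp
qed simp

lemma iter_exp_mono:
  assumes "feasible V E src dst chi f" "\<forall>g. feasible V E src dst chi g \<longrightarrow> h1 g \<le> h2 g"
  shows "iter_exp E src dst w T K f h1 \<le> iter_exp E src dst w T K f h2"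
  unfolding iter_exp_def using assms feasible_foldl_update prod_cyc_prob_nonneg
  by (intro sum_mono mult_left_mono) auto

lemma iter_exp_sqrt: "iter_exp E src dst w T K f h \<le> sqrt (iter_exp E src dst w T K f (\<lambda>g. (h g)\<^sup>2))"
proof -
  let ?L = "{es. set es \<subseteq> E - T \<and> length es = K}"
  let ?P = "\<lambda>es. prod_list (map pr es)"
  let ?H = "\<lambda>es. h (foldl upd f es)"
  have "(iter_exp E src dst w T K f h)\<^sup>2 = (\<Sum>es\<in>?L. ?P es * 1 * ?H es)\<^sup>2" unfolding iter_exp_def by simp
  also have "\<dots> \<le> (\<Sum>es\<in>?L. ?P es * 1\<^sup>2) * (\<Sum>es\<in>?L. ?P es * (?H es)\<^sup>2)"
    using prod_cyc_prob_nonneg by (intro weighted_Cauchy_Schwarz) auto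
  also have "(\<Sum>es\<in>?L. ?P es * 1\<^sup>2) = 1" using iter_exp_const_one[of K f] unfolding iter_exp_def by simp
  finally have "(iter_exp E src dst w T K f h)\<^sup>2 \<le> iter_exp E src dst w T K f (\<lambda>g. (h g)\<^sup>2)" unfolding iter_exp_def by simp
  then have "sqrt ((iter_exp E src dst w T K f h)\<^sup>2) \<le> sqrt (iter_exp E src dst w T K f (\<lambda>g. (h g)\<^sup>2))"
    by (rule real_sqrt_le_mono)
  then show ?thesis by simp
qed

abbreviation "gap g \<equiv> energy E w g - energy E w fstar"

lemma gap_eq_energy_error: "feasible V E src dst chi g \<Longrightarrow> gap g = energy E w (\<lambda>e. g e - fstar e)"
  using energy_pythagoras by simp

lemma expected_gap_step:
  assumes f: "feasible V E src dst chi f"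
  shows "(\<Sum>e\<in>E - T. pr e * gap (upd f e)) \<le> (1 - 1 / tau) * gap f"
proof -
  let ?D = "\<lambda>e. Delta E src dst w T e f"
  have "(\<Sum>e\<in>E - T. pr e * gap (upd f e)) = (\<Sum>e\<in>E - T. pr e * gap f - (?D e)\<^sup>2 / res w e / tau)"
  proof (intro sum.cong refl)
    fix e assume e: "e \<in> E - T"
    have R: "cycle_res E src dst w T e > 0" using cycle_res_pos[OF e] .
    have r: "res w e > 0" using res_pos e by auto
    have "pr e * gap (upd f e) = pr e * gap f - pr e * ((?D e)\<^sup>2 / cycle_res E src dst w T e)"
      unfolding energy_cyc_update[OF e] by (simp add: algebra_simps)
    also have "pr e * ((?D e)\<^sup>2 / cycle_res E src dst w T e) = (?D e)\<^sup>2 / res w e / tau"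
      unfolding cyc_prob_def using R r tau_pos by (simp add: field_simps)
    finally show "pr e * gap (upd f e) = pr e * gap f - (?D e)\<^sup>2 / res w e / tau" .
  qed
  also have "\<dots> = gap f - (\<Sum>e\<in>E - T. (?D e)\<^sup>2 / res w e) / tau"
    by (simp add: sum_subtractf sum_distrib_right[symmetric] sum_cyc_prob sum_divide_distrib)
  also have "\<dots> \<le> gap f - gap f / tau"
  proof -
    have "gap f \<le> (\<Sum>e\<in>E - T. (?D e)\<^sup>2 / res w e)" using energy_error_le_Delta[OF f] gap_eq_energy_error[OF f] by simp
    then have "gap f / tau \<le> (\<Sum>e\<in>E - T. (?D e)\<^sup>2 / res w e) / tau"
      using tau_pos by (intro divide_right_mono) auto
    then show ?thesis by linarith
  qed
  also have "\<dots> = (1 - 1 / tau) * gap f" by (simp add: left_diff_distrib)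
  finally show ?thesis .
qed

lemma iter_exp_gap:
  assumes "feasible V E src dst chi f"
  shows "iter_exp E src dst w T K f gap \<le> (1 - 1 / tau) ^ K * gap f"
  using assms
proof (induction K arbitrary: f)
  case 0 then show ?case by (simp add: iter_exp_0)
next
  case (Suc K)
  have q: "(1 - 1 / tau) ^ K \<ge> 0" using tcond_ge1 by simp
  have "iter_exp E src dst w T (Suc K) f gap = (\<Sum>e\<in>E - T. pr e * iter_exp E src dst w T K (upd f e) gap)"
    by (rule iter_exp_Suc)
  also have "\<dots> \<le> (\<Sum>e\<in>E - T. pr e * ((1 - 1 / tau) ^ K * gap (upd f e)))"
    using Suc cyc_update_feasible cyc_prob_nonneg by (intro sum_mono mult_left_mono) auto
  also have "\<dots> = (1 - 1 / tau) ^ K * (\<Sum>e\<in>E - T. pr e * gap (upd f e))"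
    by (simp add: sum_distrib_left algebra_simps)
  also have "\<dots> \<le> (1 - 1 / tau) ^ K * ((1 - 1 / tau) * gap f)"
    using expected_gap_step[OF Suc.prems] q by (rule mult_left_mono)
  finally show ?case by (simp add: algebra_simps)
qed

lemma expected_gap_f0_le:
  assumes eps: "0 < eps"
    and K: "K = nat \<lceil>tau * ln (tree_stretch E src dst w T * tau / eps)\<rceil>"
  shows "iter_exp E src dst w T K f0 gap \<le> eps * energy E w fstar / tau"
proof -
  let ?st = "tree_stretch E src dst w T" and ?\<xi> = "energy E w fstar"
  have t1: "tau \<ge> 1" by (rule tcond_ge1)
  have st1: "?st \<ge> 1" by (rule tree_stretch_ge1)
  have q0: "0 \<le> (1 - 1 / tau) ^ K" using t1 by simp
  have "(1 - 1 / tau) ^ K \<le> 1 / (?st * tau / eps)"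
    using t1 st1 eps unfolding K by (intro one_minus_inverse_power_le real_nat_ceiling_ge) auto
  then have qb: "(1 - 1 / tau) ^ K \<le> eps / (?st * tau)" by simp
  have "iter_exp E src dst w T K f0 gap \<le> (1 - 1 / tau) ^ K * gap f0"
    by (rule iter_exp_gap[OF f0_feasible])
  also have "\<dots> \<le> (1 - 1 / tau) ^ K * (?st * ?\<xi>)"
    using energy_f0_le_stretch energy_nonneg[of fstar] q0 by (intro mult_left_mono) simp_all
  also have "\<dots> \<le> (eps / (?st * tau)) * (?st * ?\<xi>)"
    using qb st1 energy_nonneg[of fstar] by (intro mult_right_mono) auto
  also have "\<dots> = eps * ?\<xi> / tau" using st1 t1 by (simp add: field_simps)
  finally show ?thesis .
qed

lemma expected_energy_le:
  assumes eps: "0 < eps"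
    and K: "K = nat \<lceil>tau * ln (tree_stretch E src dst w T * tau / eps)\<rceil>"
  shows "iter_exp E src dst w T K f0 (energy E w) \<le> (1 + eps) * energy E w fstar"
proof -
  let ?\<xi> = "energy E w fstar"
  have fe: "energy E w = (\<lambda>g. ?\<xi> + 1 * gap g)" by (simp add: fun_eq_iff)
  have "iter_exp E src dst w T K f0 (energy E w) = ?\<xi> + 1 * iter_exp E src dst w T K f0 gap"
    by (subst fe) (rule iter_exp_affine)
  also have "\<dots> \<le> ?\<xi> + eps * ?\<xi>"
  proof -
    have "0 \<le> eps * ?\<xi>" using eps energy_nonneg[of fstar] by simp
    then have "eps * ?\<xi> / tau \<le> eps * ?\<xi> / 1"
      using tcond_ge1 tau_pos by (intro divide_left_mono) auto
    then show ?thesis using expected_gap_f0_le[OF assms] by simp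
  qed
  finally show ?thesis by (simp add: algebra_simps)
qed

lemma mnorm_xstar: "mnorm V (laplacian E src dst w) xstar = sqrt (energy E w fstar)"
proof -
  have "(\<Sum>e\<in>E. w e * (xstar (src e) - xstar (dst e))\<^sup>2) = energy E w fstar"
    unfolding energy_def
  proof (intro sum.cong refl)
    fix e assume e: "e \<in> E"
    have "w e * (xstar (src e) - xstar (dst e))\<^sup>2 = w e * (res w e * fstar e)\<^sup>2"
      using res_mult_fstar[OF e] by simp
    also have "\<dots> = (w e * res w e) * (res w e * (fstar e)\<^sup>2)" by (simp add: power2_eq_square ac_simps)
    finally show "w e * (xstar (src e) - xstar (dst e))\<^sup>2 = res w e * (fstar e)\<^sup>2"
      using w_mult_res[OF e] by simp
  qed
  then show ?thesis unfolding mnorm_def laplacian_quadratic_form by simp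
qed

lemma expected_volt_error_le:
  assumes eps: "0 < eps"
    and K: "K = nat \<lceil>tau * ln (tree_stretch E src dst w T * tau / eps)\<rceil>"
  shows "iter_exp E src dst w T K f0
      (\<lambda>g. mnorm V (laplacian E src dst w) (\<lambda>a. tree_volt E src dst w T s g a - xstar a))
    \<le> sqrt eps * mnorm V (laplacian E src dst w) xstar"
proof -
  let ?N = "\<lambda>g. mnorm V (laplacian E src dst w) (\<lambda>a. tree_volt E src dst w T s g a - xstar a)"
  have "iter_exp E src dst w T K f0 (\<lambda>g. (?N g)\<^sup>2) \<le> iter_exp E src dst w T K f0 (\<lambda>g. 0 + tau * gap g)"
    using tree_volt_error_sq gap_eq_energy_error by (intro iter_exp_mono[OF f0_feasible]) simp
  also have "\<dots> = tau * iter_exp E src dst w T K f0 gap" by (simp only: iter_exp_affine)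
  also have "\<dots> \<le> eps * energy E w fstar"
    using expected_gap_f0_le[OF assms] tau_pos by (simp add: pos_le_divide_eq mult.commute)
  finally have "iter_exp E src dst w T K f0 (\<lambda>g. (?N g)\<^sup>2) \<le> eps * energy E w fstar" .
  then have "iter_exp E src dst w T K f0 ?N \<le> sqrt (eps * energy E w fstar)"
    by (rule order_trans[OF iter_exp_sqrt real_sqrt_le_mono])
  then show ?thesis by (simp add: mnorm_xstar real_sqrt_mult)
qed

end

lemma solver_exp_eq_iter_exp:
  "solver_exp E src dst w T K (\<lambda>es. h (solver_flow V E src dst w T chi es))
     = iter_exp E src dst w T K (tree_flow0 V E src dst T chi) h"
  unfolding solver_exp_def solver_flow_def iter_exp_def ..

theorem theorem3p1:
  fixes V :: "'v set" and E :: "'e set" and src dst :: "'e \<Rightarrow> 'v"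
    and w :: "'e \<Rightarrow> real" and T :: "'e set" and s :: 'v and chi :: "'v \<Rightarrow> real"
    and eps :: real and K :: nat
  assumes "graph V E src dst"
    and "connected_on src dst V E"
    and "\<forall>e\<in>E. w e > 0"
    and "spanning_tree V E src dst T"
    and "s \<in> V"
    and "(\<Sum>a\<in>V. chi a) = 0"
    and "0 < eps" and "eps < 1"
    and "E - T \<noteq> {}"
    and "K = nat \<lceil>tcond E src dst w T *
                  ln (tree_stretch E src dst w T * tcond E src dst w T / eps)\<rceil>"
  shows "(solver_exp E src dst w T K
           (\<lambda>es. energy E w (solver_flow V E src dst w T chi es))
         \<le> (1 + eps) * energy E w (opt_flow V E src dst w chi))
       \<and> (solver_exp E src dst w T K
           (\<lambda>es. mnorm V (laplacian E src dst w)
                   (\<lambda>a. tree_volt E src dst w T s (solver_flow V E src dst w T chi es) a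
                        - mvec V (pinv V (laplacian E src dst w)) chi a))
         \<le> sqrt eps * mnorm V (laplacian E src dst w)
                        (mvec V (pinv V (laplacian E src dst w)) chi))"
proof -
  interpret tree_network V E src dst w T s chi
    by unfold_locales (use assms in auto)
  show ?thesis
    using expected_energy_le[OF assms(7,10)] expected_volt_error_le[OF assms(7,10)]
    unfolding opt_flow_eq_fstar solver_exp_eq_iter_exp[symmetric] by simp
qed

end
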